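(* Let $n\ge 2$, $2\le k\le n$ and $0\le l<k$. Let $\Omega\subset M^n(K)$ be a bounded, open, connected domain with $C^2$ boundary, and let $c_1$, $c_2>0$ be constants. If $u\in C^2(\overline{\Omega})$ solves $$\frac{\sigma_k(\nabla^2u+Kug)}{\sigma_l(\nabla^2u+Kug)}=\frac{\binom{n}{k}}{\binom{n}{l}}\ \text{in }\overline{\Omega},\qquad u=Kc_1\ \text{on }\partial\Omega,\qquad u_\nu=c_2\ \text{on }\partial\Omega,\qquad Ku\ge 0\ \text{in }\Omega,$$ with $\nu$ the outward unit normal to $\partial\Omega$, then $\nabla^2u+Kug\in\Gamma_k$ at every point of $\overline{\Omega}$.
   Context: $M^n(K)$ denotes the complete simply connected $n$-dimensional Riemannian manifold of constant sectional curvature $K$ with metric $g$; when $K>0$ it is taken to be the open hemisphere $S^n_+(1/\sqrt{K})$. For a symmetric 2-tensor $A$, $\sigma_j(A)$ is the $j$-th elementary symmetric function of its eigenvalues (with respect to $g$), $\sigma_0=1$. The Gårding cone is $\Gamma_k=\{\lambda\in\mathbb R^n:\sigma_i(\lambda)>0,\ 1\le i\le k\}$; a symmetric tensor lies in $\Gamma_k$ if its eigenvalue vector does. $\nabla^2 u$ is the Riemannian Hessian. *)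

theory Defs
  imports "HOL-Analysis.Analysis"
begin

definition pd :: "(real^'n \<Rightarrow> real) \<Rightarrow> 'n \<Rightarrow> real^'n \<Rightarrow> real" where
  "pd f i x = deriv (\<lambda>t. f (x + t *\<^sub>R axis i 1)) 0"

definition egrad :: "(real^'n \<Rightarrow> real) \<Rightarrow> real^'n \<Rightarrow> real^'n" where
  "egrad f x = (\<chi> i. pd f i x)"

definition C2_on :: "(real^'n) set \<Rightarrow> (real^'n \<Rightarrow> real) \<Rightarrow> bool" where
  "C2_on U f \<longleftrightarrow> (\<forall>x\<in>U. f differentiable (at x)) \<and>
     (\<forall>i. \<forall>x\<in>U. (pd f i) differentiable (at x)) \<and>
     (\<forall>i j. continuous_on U (pd (pd f j) i))"

text \<open>Model of M^n(K): conformal (stereographic / Poincare ball) coordinates.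
  Domain {x. |K| |x|^2 < 1}: all of R^n for K = 0, the Poincare ball for K < 0,
  and the stereographic image of the open hemisphere for K > 0.
  Metric g = 4/(1 + K|x|^2)^2 * delta, of constant sectional curvature K.\<close>
definition model_space :: "real \<Rightarrow> (real^'n) set" where
  "model_space K = {x. \<bar>K\<bar> * (norm x)\<^sup>2 < 1}"

definition gK :: "real \<Rightarrow> real^'n \<Rightarrow> real^'n^'n" where
  "gK K x = (4 / (1 + K * (norm x)\<^sup>2)\<^sup>2) *\<^sub>R mat 1"

definition christoffel :: "(real^'n \<Rightarrow> real^'n^'n) \<Rightarrow> 'n \<Rightarrow> 'n \<Rightarrow> 'n \<Rightarrow> real^'n \<Rightarrow> real" where
  "christoffel g m i j x = (1/2) * (\<Sum>l\<in>UNIV. matrix_inv (g x) $ m $ l *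
      (pd (\<lambda>y. g y $ j $ l) i x + pd (\<lambda>y. g y $ i $ l) j x - pd (\<lambda>y. g y $ i $ j) l x))"

definition rhess :: "(real^'n \<Rightarrow> real^'n^'n) \<Rightarrow> (real^'n \<Rightarrow> real) \<Rightarrow> real^'n \<Rightarrow> real^'n^'n" where
  "rhess g u x = (\<chi> i j. pd (pd u j) i x - (\<Sum>m\<in>UNIV. christoffel g m i j x * pd u m x))"

definition diagm :: "real^'n \<Rightarrow> real^'n^'n" where
  "diagm lam = (\<chi> i j. if i = j then lam $ i else 0)"

definition g_eigvals :: "real^'n^'n \<Rightarrow> real^'n^'n \<Rightarrow> real^'n \<Rightarrow> bool" where
  "g_eigvals g A lam \<longleftrightarrow> (\<exists>P. transpose P ** g ** P = mat 1 \<and> transpose P ** A ** P = diagm lam)"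

definition tensor_eigvals :: "real^'n^'n \<Rightarrow> real^'n^'n \<Rightarrow> real^'n" where
  "tensor_eigvals g A = (SOME lam. g_eigvals g A lam)"

definition esym :: "nat \<Rightarrow> real^'n \<Rightarrow> real" where
  "esym j lam = (\<Sum>S\<in>{S. card S = j}. \<Prod>i\<in>S. lam $ i)"

definition gamma_cone :: "nat \<Rightarrow> (real^'n) set" where
  "gamma_cone k = {lam. \<forall>i\<in>{1..k}. esym i lam > 0}"

definition sigma_t :: "nat \<Rightarrow> real^'n^'n \<Rightarrow> real^'n^'n \<Rightarrow> real" where
  "sigma_t j g A = esym j (tensor_eigvals g A)"

definition local_defining_fn :: "(real^'n) set \<Rightarrow> real^'n \<Rightarrow> (real^'n) set \<Rightarrow> (real^'n \<Rightarrow> real) \<Rightarrow> bool" where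
  "local_defining_fn \<Omega> p V \<psi> \<longleftrightarrow> open V \<and> p \<in> V \<and> C2_on V \<psi> \<and>
     (\<forall>x\<in>V. egrad \<psi> x \<noteq> 0) \<and> \<Omega> \<inter> V = {x\<in>V. \<psi> x < 0}"

definition C2_boundary :: "(real^'n) set \<Rightarrow> bool" where
  "C2_boundary \<Omega> \<longleftrightarrow> (\<forall>p\<in>frontier \<Omega>. \<exists>V \<psi>. local_defining_fn \<Omega> p V \<psi>)"

definition outward_unit_normal :: "real^'n^'n \<Rightarrow> (real^'n) set \<Rightarrow> real^'n \<Rightarrow> real^'n \<Rightarrow> bool" where
  "outward_unit_normal g \<Omega> p \<nu> \<longleftrightarrow> (\<exists>V \<psi>. local_defining_fn \<Omega> p V \<psi> \<and>
     (let v = matrix_inv g *v egrad \<psi> p in \<nu> = (1 / sqrt (v \<bullet> (g *v v))) *\<^sub>R v))"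

end

theory Submission
  imports Defs "HOL-Computational_Algebra.Polynomial"
begin

text \<open>Let \<open>A = \<nabla>\<^sup>2u + K u g\<close>. The Neumann condition \<open>u\<^sub>\<nu> = c\<^sub>2 > 0\<close> makes \<open>u\<close> drop below
  its boundary value \<open>K c\<^sub>1\<close> just inside \<open>\<Omega>\<close>, so \<open>u\<close> attains its minimum over the closure
  at an interior point \<open>x\<^sub>0\<close>. There the gradient vanishes, the Riemannian Hessian reduces to
  the (semidefinite) coordinate Hessian, and \<open>K u \<ge> 0\<close>, so all eigenvalues of \<open>A\<close> are
  nonnegative; as the equation forbids \<open>\<sigma>\<^sub>k(A) = 0\<close>, \<open>A(x\<^sub>0) \<in> \<Gamma>\<^sub>k\<close>.
  By the strict Newton inequality (proved via real-rootedness of \<open>\<Prod>\<^sub>i (t + \<lambda>\<^sub>i)\<close> and its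
  derivatives), a vector with \<open>\<sigma>\<^sub>1, \<dots>, \<sigma>\<^sub>k \<ge> 0\<close> and \<open>\<sigma>\<^sub>k \<noteq> 0\<close> lies in \<open>\<Gamma>\<^sub>k\<close>. Since
  \<open>\<sigma>\<^sub>k(A)\<close> never vanishes and the \<open>\<sigma>\<^sub>j(A)\<close> are continuous, the set of points where
  \<open>A \<in> \<Gamma>\<^sub>k\<close> is open and closed in the connected closure of \<open>\<Omega>\<close>, hence is all of it.\<close>

section \<open>Real-rooted polynomials and the strict Newton inequality\<close>

definition real_rooted :: "real poly \<Rightarrow> bool" where
  "real_rooted p \<longleftrightarrow> p \<noteq> 0 \<and> degree p \<le> (\<Sum>z\<in>{z. poly p z = 0}. order z p)"

lemma prod_linear_factors_dvd:
  fixes p :: "real poly"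
  assumes "p \<noteq> 0" "finite W" "\<forall>w\<in>W. n w \<le> order w p"
  shows "(\<Prod>w\<in>W. [:-w,1:]^(n w)) dvd p"
  using assms(2,3)
proof (induction W rule: finite_induct)
  case empty
  then show ?case by simp
next
  case (insert a W)
  then have "(\<Prod>w\<in>W. [:-w,1:]^(n w)) dvd p"
    by simp
  then obtain q where q: "p = (\<Prod>w\<in>W. [:-w,1:]^(n w)) * q"
    by (elim dvdE)
  have nz: "(\<Prod>w\<in>W. [:-w,1:]^(n w)) \<noteq> (0::real poly)"
    by (simp add: insert(1))
  have "poly (\<Prod>w\<in>W. [:-w,1:]^(n w)) a \<noteq> 0"
    using insert(2) by (simp add: poly_prod insert(1))
  then have "order a (\<Prod>w\<in>W. [:-w,1:]^(n w)) = 0"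
    using order_root by blast
  moreover have "q \<noteq> 0"
    using q assms(1) by auto
  ultimately have "order a p = order a q"
    using q order_mult[of _ q a] nz by simp
  then have "[:-a,1:]^(n a) dvd q"
    using insert(4) order_divides by auto
  then show ?case
    using q insert(1,2) by (simp add: mult.commute mult_dvd_mono)
qed

lemma real_rooted_smult_prod:
  fixes W :: "real set"
  assumes "c \<noteq> 0" "finite W"
  shows "real_rooted (smult c (\<Prod>w\<in>W. [:-w,1:]^(n w)))" (is "real_rooted ?p")
proof -
  have "(\<Prod>w\<in>W. [:-w,1:]^(n w)) \<noteq> (0::real poly)"
    using assms(2) by simp
  then have p0: "?p \<noteq> 0"
    using assms(1) by simp
  have ord: "n w \<le> order w ?p" if "w \<in> W" for w
  proof -
    have "[:-w,1:]^(n w) dvd (\<Prod>w\<in>W. [:-w,1:]^(n w))"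
      by (rule dvd_prodI[OF assms(2) that])
    then have "[:-w,1:]^(n w) dvd ?p"
      by (rule dvd_smult)
    then show ?thesis
      using p0 by (simp add: order_divides)
  qed
  have fZ: "finite {z. poly ?p z = 0}"
    using poly_roots_finite[OF p0] by simp
  have "degree ?p = (\<Sum>w\<in>W. n w)"
    using assms by (simp add: degree_prod_eq_sum_degree degree_power_eq)
  also have "\<dots> = (\<Sum>w\<in>{w\<in>W. n w \<noteq> 0}. n w)"
    by (rule sum.mono_neutral_right) (use assms(2) in auto)
  also have "\<dots> \<le> (\<Sum>w\<in>{w\<in>W. n w \<noteq> 0}. order w ?p)"
    by (rule sum_mono) (use ord in auto)
  also have "\<dots> \<le> (\<Sum>z\<in>{z. poly ?p z = 0}. order z ?p)"
  proof (rule sum_mono2[OF fZ])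
    show "{w \<in> W. n w \<noteq> 0} \<subseteq> {z. poly ?p z = 0}"
    proof
      fix w
      assume "w \<in> {w \<in> W. n w \<noteq> 0}"
      then have "order w ?p \<noteq> 0"
        using ord by fastforce
      then show "w \<in> {z. poly ?p z = 0}"
        using order_root[of ?p w] by simp
    qed
  qed auto
  finally show ?thesis
    unfolding real_rooted_def using p0 by simp
qed

lemma real_rooted_eq_smult_prod:
  assumes "real_rooted p"
  shows "p = smult (lead_coeff p) (\<Prod>w\<in>{z. poly p z = 0}. [:-w,1:]^(order w p))"
proof -
  define Q where "Q = (\<Prod>w\<in>{z. poly p z = 0}. [:-w,1:]^(order w p))"
  have p0: "p \<noteq> 0"
    using assms real_rooted_def by auto
  have "Q dvd p"
    unfolding Q_def by (rule prod_linear_factors_dvd[OF p0 poly_roots_finite[OF p0]]) auto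
  then obtain r where r: "p = Q * r"
    by (elim dvdE)
  have Q0: "Q \<noteq> 0"
    unfolding Q_def using poly_roots_finite[OF p0] by simp
  have r0: "r \<noteq> 0"
    using r p0 by auto
  have "degree Q = (\<Sum>w\<in>{z. poly p z = 0}. order w p)"
    unfolding Q_def by (simp add: degree_prod_eq_sum_degree degree_power_eq)
  then have "degree p \<le> degree Q"
    using assms unfolding real_rooted_def by simp
  moreover have "degree p = degree Q + degree r"
    using r Q0 r0 degree_mult_eq by blast
  ultimately have "degree r = 0"
    by simp
  then obtain c where c: "r = [:c:]"
    by (metis degree_eq_zeroE)
  have "lead_coeff Q = 1"
    unfolding Q_def by (simp add: lead_coeff_prod lead_coeff_power)
  moreover have "p = smult c Q"
    using r c by simp
  ultimately show ?thesis
    unfolding Q_def[symmetric] by simp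
qed

lemma poly_pderiv_root_between:
  fixes p :: "real poly"
  assumes "a < b" "poly p a = 0" "poly p b = 0"
  obtains s where "a < s" "s < b" "poly (pderiv p) s = 0"
proof -
  have "poly p differentiable (at x)" for x
    unfolding real_differentiable_def using poly_DERIV by blast
  moreover have "continuous_on {a..b} (poly p)"
    by (intro continuous_intros)
  ultimately obtain s where "a < s" "s < b" "DERIV (poly p) s :> 0"
    using Rolle[of a b "poly p"] assms by auto
  then show ?thesis
    using that DERIV_unique[OF poly_DERIV] by blast
qed

lemma finite_next_element:
  fixes Z :: "real set"
  assumes "finite Z" "z \<in> Z" "z \<noteq> Max Z"
  obtains z' where "z' \<in> Z" "z < z'" "\<And>y. y \<in> Z \<Longrightarrow> z < y \<Longrightarrow> z' \<le> y"
proof -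
  have "z < Max Z"
    using order_le_neq_trans[OF Max_ge[OF assms(1,2)] assms(3)] .
  then have "{y\<in>Z. z < y} \<noteq> {}"
    using Max_in[OF assms(1)] assms(2) by auto
  then show ?thesis
    using that[of "Min {y\<in>Z. z < y}"] Min_in[of "{y\<in>Z. z < y}"] Min_le[of "{y\<in>Z. z < y}"] assms(1)
    by auto
qed

text \<open>Between consecutive roots of \<open>p\<close> lies a root of \<open>p'\<close> (Rolle); these are distinct from
  the roots of \<open>p\<close> and from each other.\<close>

lemma pderiv_roots_between:
  fixes p :: "real poly"
  assumes "finite Z" "\<And>z. z \<in> Z \<Longrightarrow> poly p z = 0"
  obtains S where "finite S" "card S = card Z - 1" "S \<inter> Z = {}"
    "\<And>s. s \<in> S \<Longrightarrow> poly (pderiv p) s = 0"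
proof (cases "Z = {}")
  case True
  then show ?thesis
    using that[of "{}"] by simp
next
  case False
  define Z' where "Z' = Z - {Max Z}"
  have "\<exists>s. z < s \<and> poly (pderiv p) s = 0 \<and> (\<forall>y\<in>Z. z < y \<longrightarrow> s < y)" if "z \<in> Z'" for z
  proof -
    have z: "z \<in> Z" "z \<noteq> Max Z"
      using that unfolding Z'_def by auto
    obtain z' where z': "z' \<in> Z" "z < z'" "\<And>y. y \<in> Z \<Longrightarrow> z < y \<Longrightarrow> z' \<le> y"
      using finite_next_element[OF assms(1) z] by blast
    moreover obtain s where "z < s" "s < z'" "poly (pderiv p) s = 0"
      using poly_pderiv_root_between[OF z'(2)] assms(2) z'(1) z(1) by blast
    ultimately show ?thesis
      by force
  qed
  then obtain s where s: "\<And>z. z \<in> Z' \<Longrightarrow> z < s z \<and> poly (pderiv p) (s z) = 0 \<and> (\<forall>y\<in>Z. z < y \<longrightarrow> s z < y)"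
    by metis
  have mono: "s a < s b" if "a \<in> Z'" "b \<in> Z'" "a < b" for a b
    using s[OF that(1)] s[OF that(2)] that(2,3) unfolding Z'_def by force
  have "inj_on s Z'"
  proof (rule inj_onI)
    fix a b
    assume "a \<in> Z'" "b \<in> Z'" "s a = s b"
    then show "a = b"
      using mono[of a b] mono[of b a] by (cases a b rule: linorder_cases) auto
  qed
  show ?thesis
  proof (rule that)
    show "finite (s ` Z')"
      using assms(1) unfolding Z'_def by simp
    show "card (s ` Z') = card Z - 1"
      using \<open>inj_on s Z'\<close> assms(1) False by (simp add: card_image Z'_def)
    show "s ` Z' \<inter> Z = {}"
      using s by force
    show "poly (pderiv p) x = 0" if "x \<in> s ` Z'" for x
      using that s by blast
  qed
qed

lemma real_rooted_pderiv:
  assumes "real_rooted p" "degree p \<ge> 1"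
  shows "real_rooted (pderiv p)"
proof -
  define Z where "Z = {z. poly p z = 0}"
  define R where "R = {z. poly (pderiv p) z = 0}"
  have p0: "p \<noteq> 0"
    using assms(1) real_rooted_def by auto
  have d0: "pderiv p \<noteq> 0"
    using assms(2) pderiv_eq_0_iff[of p] by simp
  have fZ: "finite Z" and fR: "finite R"
    unfolding Z_def R_def using poly_roots_finite p0 d0 by blast+
  obtain S where S: "finite S" "card S = card Z - 1" "S \<inter> Z = {}"
    and S_roots: "\<And>s. s \<in> S \<Longrightarrow> poly (pderiv p) s = 0"
    using pderiv_roots_between[OF fZ, of p] unfolding Z_def by blast
  have deg_le: "degree p \<le> (\<Sum>z\<in>Z. order z p)"
    using assms(1) unfolding real_rooted_def Z_def by simp
  then have "Z \<noteq> {}"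
    using assms(2) by auto
  then have "card Z \<ge> 1"
    using fZ by (simp add: Suc_le_eq card_gt_0_iff)
  have "(\<Sum>z\<in>Z. order z p) = (\<Sum>z\<in>Z. Suc (order z (pderiv p)))"
    by (rule sum.cong) (use order_pderiv[OF p0] Z_def in auto)
  then have sum_Z: "(\<Sum>z\<in>Z. order z p) = (\<Sum>z\<in>Z. order z (pderiv p)) + card Z"
    by (simp add: sum_Suc)
  have "card S \<le> (\<Sum>s\<in>S. order s (pderiv p))"
    using sum_mono[of S "\<lambda>_. 1" "\<lambda>s. order s (pderiv p)"] S_roots order_root[of "pderiv p"] d0
    by (simp add: Suc_le_eq)
  then have "degree (pderiv p) \<le> (\<Sum>z\<in>Z. order z (pderiv p)) + (\<Sum>s\<in>S. order s (pderiv p))"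
    using deg_le sum_Z S(2) \<open>card Z \<ge> 1\<close> by (simp add: degree_pderiv)
  also have "\<dots> = (\<Sum>z\<in>Z \<union> S. order z (pderiv p))"
    by (rule sum.union_disjoint[symmetric]) (use fZ S in auto)
  also have "\<dots> \<le> (\<Sum>z\<in>R \<union> Z. order z (pderiv p))"
    by (rule sum_mono2) (use fR fZ S_roots R_def in auto)
  also have "\<dots> = (\<Sum>z\<in>R. order z (pderiv p))"
  proof (rule sum.mono_neutral_right)
    show "\<forall>z\<in>R \<union> Z - R. order z (pderiv p) = 0"
      using order_root[of "pderiv p"] unfolding R_def by simp
  qed (use fR fZ in auto)
  finally show ?thesis
    unfolding real_rooted_def R_def using d0 by simp
qed

lemma real_rooted_higher_pderiv:
  assumes "real_rooted p" "m < degree p"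
  shows "real_rooted ((pderiv ^^ m) p)"
  using assms(2)
proof (induction m)
  case 0
  then show ?case
    using assms(1) by simp
next
  case (Suc m)
  then show ?case
    using real_rooted_pderiv[of "(pderiv ^^ m) p"] by (simp add: degree_higher_pderiv)
qed

text \<open>\<open>log_curv p\<close> is \<open>p(0)\<^sup>2\<close> times the second derivative of \<open>ln \<bar>p\<bar>\<close> at \<open>0\<close>, which
  turns products into sums.\<close>

definition log_curv :: "real poly \<Rightarrow> real" where
  "log_curv p = poly p 0 * poly (pderiv (pderiv p)) 0 - (poly (pderiv p) 0)\<^sup>2"

lemma log_curv_mult: "log_curv (p * q) = (poly q 0)\<^sup>2 * log_curv p + (poly p 0)\<^sup>2 * log_curv q"
  unfolding log_curv_def by (simp add: pderiv_mult pderiv_add algebra_simps power2_eq_square)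

lemma log_curv_smult: "log_curv (smult c p) = c\<^sup>2 * log_curv p"
  unfolding log_curv_def by (simp add: pderiv_smult algebra_simps power2_eq_square)

definition log_concave_at0 :: "real poly \<Rightarrow> bool" where
  "log_concave_at0 p \<longleftrightarrow> poly p 0 \<noteq> 0 \<and> log_curv p \<le> 0 \<and> (degree p > 0 \<longrightarrow> log_curv p < 0)"

lemma log_concave_at0_1: "log_concave_at0 1"
  unfolding log_concave_at0_def log_curv_def by simp

lemma log_concave_at0_linear: "z \<noteq> 0 \<Longrightarrow> log_concave_at0 [:-z, 1:]"
  unfolding log_concave_at0_def log_curv_def by (simp add: pderiv_pCons)

lemma log_concave_at0_mult:
  assumes "log_concave_at0 p" "log_concave_at0 q"
  shows "log_concave_at0 (p * q)"
proof -
  have p0: "poly p 0 \<noteq> 0" "poly q 0 \<noteq> 0" and le: "log_curv p \<le> 0" "log_curv q \<le> 0"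
    using assms unfolding log_concave_at0_def by auto
  then have sq: "(poly p 0)\<^sup>2 > 0" "(poly q 0)\<^sup>2 > 0"
    by auto
  have "degree (p * q) = degree p + degree q"
    using p0 by (intro degree_mult_eq) auto
  moreover have "log_curv p < 0" if "degree p > 0"
    using assms(1) that unfolding log_concave_at0_def by auto
  moreover have "log_curv q < 0" if "degree q > 0"
    using assms(2) that unfolding log_concave_at0_def by auto
  ultimately show ?thesis
    unfolding log_concave_at0_def log_curv_mult using p0 le sq
    by (auto simp: add_nonpos_nonpos mult_nonneg_nonpos mult_pos_neg add_neg_nonpos add_nonpos_neg)
qed

lemma log_concave_at0_power: "log_concave_at0 p \<Longrightarrow> log_concave_at0 (p ^ n)"
  by (induction n) (auto simp: log_concave_at0_1 log_concave_at0_mult)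

lemma log_concave_at0_prod:
  "finite W \<Longrightarrow> (\<And>w. w \<in> W \<Longrightarrow> log_concave_at0 (f w)) \<Longrightarrow> log_concave_at0 (\<Prod>w\<in>W. f w)"
  by (induction W rule: finite_induct) (auto simp: log_concave_at0_1 log_concave_at0_mult)

lemma real_rooted_log_curv_neg:
  assumes "real_rooted p" "poly p 0 \<noteq> 0" "degree p > 0"
  shows "log_curv p < 0"
proof -
  define Q where "Q = (\<Prod>w\<in>{z. poly p z = 0}. [:-w,1:]^(order w p))"
  have p0: "p \<noteq> 0"
    using assms(2) by auto
  have p_eq: "p = smult (lead_coeff p) Q"
    unfolding Q_def by (rule real_rooted_eq_smult_prod[OF assms(1)])
  have "log_concave_at0 Q"
    unfolding Q_def using poly_roots_finite[OF p0] assms(2)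
    by (intro log_concave_at0_prod log_concave_at0_power log_concave_at0_linear) auto
  moreover have "degree Q > 0"
    using assms(3) p_eq by (metis degree_smult_le le_zero_eq neq0_conv)
  ultimately have "log_curv Q < 0"
    unfolding log_concave_at0_def by simp
  then show ?thesis
    using p0 by (subst p_eq) (simp add: log_curv_smult mult_pos_neg)
qed

lemma coeff_prod_linear:
  fixes \<mu> :: "'a \<Rightarrow> real"
  assumes "finite A"
  shows "coeff (\<Prod>i\<in>A. [:\<mu> i, 1:]) m = (\<Sum>X\<in>{X. X \<subseteq> A \<and> card X + m = card A}. \<Prod>i\<in>X. \<mu> i)"
proof -
  have "(\<Prod>i\<in>A. [:\<mu> i, 1:]) = (\<Prod>i\<in>A. [:\<mu> i:] + [:0, 1:])"
    by simp
  also have "\<dots> = (\<Sum>X\<in>Pow A. (\<Prod>i\<in>X. [:\<mu> i:]) * (\<Prod>i\<in>A-X. [:0, 1:]))"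
    by (rule prod_add[OF assms])
  also have "\<dots> = (\<Sum>X\<in>Pow A. monom (\<Prod>i\<in>X. \<mu> i) (card A - card X))"
  proof (rule sum.cong[OF refl])
    fix X
    assume "X \<in> Pow A"
    then have "(\<Prod>i\<in>A-X. [:0, 1::real:]) = [:0, 1:]^(card A - card X)"
      using assms by (simp add: card_Diff_subset finite_subset)
    then show "(\<Prod>i\<in>X. [:\<mu> i:]) * (\<Prod>i\<in>A-X. [:0, 1:]) = monom (\<Prod>i\<in>X. \<mu> i) (card A - card X)"
      by (simp add: prod_to_poly monom_altdef)
  qed
  finally have "coeff (\<Prod>i\<in>A. [:\<mu> i, 1:]) m
      = (\<Sum>X\<in>Pow A. if card A - card X = m then (\<Prod>i\<in>X. \<mu> i) else 0)"
    by (simp add: coeff_sum coeff_monom)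
  also have "\<dots> = (\<Sum>X\<in>{X\<in>Pow A. card A - card X = m}. \<Prod>i\<in>X. \<mu> i)"
    by (subst sum.inter_filter[symmetric]) (simp_all add: assms)
  also have "{X\<in>Pow A. card A - card X = m} = {X. X \<subseteq> A \<and> card X + m = card A}"
    using assms card_mono by fastforce
  finally show ?thesis .
qed

section \<open>Elementary symmetric functions and the Garding cone\<close>

lemma esym_0:
  fixes lam :: "real^'n"
  shows "esym 0 lam = 1"
proof -
  have "{S::'n set. card S = 0} = {{}}"
    by (auto simp: card_eq_0_iff)
  then show ?thesis
    unfolding esym_def by simp
qed

lemma esym_nonneg:
  fixes lam :: "real^'n"
  shows "(\<And>i. lam $ i \<ge> 0) \<Longrightarrow> esym j lam \<ge> 0"
  unfolding esym_def by (intro sum_nonneg prod_nonneg) auto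

lemma esym_eq_coeff_prod:
  fixes lam :: "real^'n"
  assumes "j \<le> CARD('n)"
  shows "esym j lam = coeff (\<Prod>i\<in>UNIV. [:lam $ i, 1:]) (CARD('n) - j)"
proof -
  have "card X \<le> CARD('n)" for X :: "'n set"
    by (rule card_mono) auto
  then have "{X::'n set. X \<subseteq> UNIV \<and> card X + (CARD('n) - j) = CARD('n)} = {X. card X = j}"
    using assms by fastforce
  then show ?thesis
    unfolding esym_def by (simp add: coeff_prod_linear)
qed

lemma real_rooted_prod_linear:
  fixes \<mu> :: "'a \<Rightarrow> real"
  assumes "finite A"
  shows "real_rooted (\<Prod>i\<in>A. [:\<mu> i, 1:])"
proof -
  have "(\<Prod>i\<in>A. [:\<mu> i, 1:]) = (\<Prod>w\<in>(\<lambda>i. - \<mu> i) ` A. \<Prod>i\<in>{i\<in>A. - \<mu> i = w}. [:\<mu> i, 1:])"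
    by (rule prod.image_gen[OF assms])
  also have "\<dots> = (\<Prod>w\<in>(\<lambda>i. - \<mu> i) ` A. [:-w, 1:]^(card {i\<in>A. - \<mu> i = w}))"
  proof (rule prod.cong[OF refl])
    fix w
    have "(\<Prod>i\<in>{i\<in>A. - \<mu> i = w}. [:\<mu> i, 1:]) = (\<Prod>i\<in>{i\<in>A. - \<mu> i = w}. [:-w, 1:])"
      by (rule prod.cong) auto
    then show "(\<Prod>i\<in>{i\<in>A. - \<mu> i = w}. [:\<mu> i, 1:]) = [:-w, 1:]^(card {i\<in>A. - \<mu> i = w})"
      by simp
  qed
  finally show ?thesis
    using real_rooted_smult_prod[of 1 "(\<lambda>i. - \<mu> i) ` A" "\<lambda>w. card {i\<in>A. - \<mu> i = w}"] assms
    by simp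
qed

text \<open>The coefficients \<open>\<sigma>\<^sub>j\<close> of the real-rooted polynomial \<open>\<Prod>\<^sub>i (t + \<lambda>\<^sub>i)\<close> become, after
  differentiating \<open>n - j - 1\<close> times, the values at \<open>0\<close> of a real-rooted polynomial and its first two
  derivatives; its \<open>log_curv\<close> is then a positive multiple of \<open>- \<sigma>\<^sub>j\<^sub>-\<^sub>1 \<sigma>\<^sub>j\<^sub>+\<^sub>1\<close> when \<open>\<sigma>\<^sub>j = 0\<close>.\<close>

lemma esym_newton_strict:
  fixes lam :: "real^'n"
  assumes j: "1 \<le> j" "j + 1 \<le> CARD('n)" and z: "esym j lam = 0" and nz: "esym (j + 1) lam \<noteq> 0"
  shows "esym (j - 1) lam * esym (j + 1) lam < 0"
proof -
  define F where "F = (\<Prod>i\<in>(UNIV::'n set). [:lam $ i, 1::real:])"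
  define m where "m = CARD('n) - j - 1"
  define S where "S = (pderiv ^^ m) F"
  have degF: "degree F = CARD('n)"
    unfolding F_def by (simp add: degree_prod_eq_sum_degree)
  have coeff_S: "poly ((pderiv ^^ i) S) 0 = fact (m + i) * coeff F (m + i)" for i
  proof -
    have "(pderiv ^^ i) S = (pderiv ^^ (m + i)) F"
      unfolding S_def by (simp add: funpow_add add.commute)
    then show ?thesis
      by (simp add: poly_0_coeff_0 coeff_higher_pderiv pochhammer_fact)
  qed
  have c0: "coeff F m = esym (j + 1) lam"
    using esym_eq_coeff_prod[of "j + 1" lam] j unfolding F_def m_def by (simp add: diff_diff_add)
  have c1: "coeff F (m + 1) = esym j lam"
    using esym_eq_coeff_prod[of j lam] j unfolding F_def m_def by (simp add: Suc_diff_Suc)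
  have c2: "coeff F (m + 2) = esym (j - 1) lam"
  proof -
    have "m + 2 = CARD('n) - (j - 1)"
      using j unfolding m_def by simp
    then show ?thesis
      using esym_eq_coeff_prod[of "j - 1" lam] j unfolding F_def by simp
  qed
  have "real_rooted S"
    unfolding S_def F_def
    by (rule real_rooted_higher_pderiv[OF real_rooted_prod_linear]) (use j degF F_def m_def in auto)
  moreover have "poly S 0 \<noteq> 0"
    using coeff_S[of 0] c0 nz by simp
  moreover have "degree S > 0"
    using j degF unfolding S_def m_def by (simp add: degree_higher_pderiv)
  ultimately have "log_curv S < 0"
    by (rule real_rooted_log_curv_neg)
  then have "(fact m * fact (m + 2)) * (esym (j - 1) lam * esym (j + 1) lam) < (0::real)"
    using coeff_S[of 0] coeff_S[of 1] coeff_S[of 2] c0 c1 c2 z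
    unfolding log_curv_def by (simp add: numeral_2_eq_2 algebra_simps)
  then show ?thesis
    by (simp add: mult_less_0_iff)
qed

lemma gamma_cone_if_esym_nonneg:
  fixes lam :: "real^'n"
  assumes k: "k \<le> CARD('n)" and nonneg: "\<forall>i\<in>{1..k}. esym i lam \<ge> 0" and pos: "esym k lam > 0"
  shows "lam \<in> gamma_cone k"
proof (rule ccontr)
  assume "lam \<notin> gamma_cone k"
  then obtain i where i: "i \<in> {1..k}" "\<not> esym i lam > 0"
    unfolding gamma_cone_def by auto
  then have "esym i lam = 0"
    using nonneg[rule_format, OF i(1)] by linarith
  then have ne: "{i\<in>{1..k}. esym i lam = 0} \<noteq> {}"
    using i(1) by blast
  define j where "j = Max {i\<in>{1..k}. esym i lam = 0}"
  have j: "j \<in> {1..k}" "esym j lam = 0"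
    using Max_in[OF _ ne] j_def by auto
  have j_max: "i \<le> j" if "i \<in> {1..k}" "esym i lam = 0" for i
    using that Max_ge j_def by auto
  have "j < k"
    using j pos by (cases "j = k") auto
  then have "j + 1 \<in> {1..k}"
    by simp
  then have "esym (j + 1) lam \<ge> 0" "esym (j + 1) lam \<noteq> 0"
    using nonneg j_max[of "j + 1"] by auto
  then have "esym (j + 1) lam > 0"
    by simp
  moreover have "esym (j - 1) lam * esym (j + 1) lam < 0"
    by (rule esym_newton_strict) (use j \<open>j < k\<close> k calculation in auto)
  ultimately have "esym (j - 1) lam < 0"
    by (simp add: mult_less_0_iff)
  moreover have "esym (j - 1) lam \<ge> 0"
  proof (cases "j = 1")
    case True
    then show ?thesis
      using esym_0[of lam] by simp
  next
    case False
    then have "j - 1 \<in> {1..k}"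
      using j by auto
    then show ?thesis
      using nonneg by blast
  qed
  ultimately show False
    by simp
qed

lemma gamma_cone_if_nonneg:
  fixes lam :: "real^'n"
  assumes "k \<le> CARD('n)" "\<And>i. lam $ i \<ge> 0" "esym k lam \<noteq> 0"
  shows "lam \<in> gamma_cone k"
proof (rule gamma_cone_if_esym_nonneg)
  show "esym k lam > 0"
    using assms(3) esym_nonneg[of lam k, OF assms(2)] by linarith
qed (use assms(1,2) esym_nonneg[of lam] in auto)

text \<open>Since \<open>\<sigma>\<^sub>k\<close> does not vanish, the closure of \<open>\<Gamma>\<^sub>k\<close> adds nothing, so the set of points
  mapped into \<open>\<Gamma>\<^sub>k\<close> is closed as well as open.\<close>

lemma gamma_cone_on_connected:
  fixes lam :: "'a::topological_space \<Rightarrow> real^'n"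
  assumes "connected S" "x0 \<in> S" "lam x0 \<in> gamma_cone k" "k \<le> CARD('n)"
    and cont: "\<And>i. i \<in> {1..k} \<Longrightarrow> continuous_on S (\<lambda>x. esym i (lam x))"
    and nz: "\<And>x. x \<in> S \<Longrightarrow> esym k (lam x) \<noteq> 0"
    and "x \<in> S"
  shows "lam x \<in> gamma_cone k"
proof (cases "k = 0")
  case True
  then show ?thesis
    by (simp add: gamma_cone_def)
next
  case False
  define T where "T = {x\<in>S. lam x \<in> gamma_cone k}"
  have T_open: "T = (\<Inter>i\<in>{1..k}. S \<inter> (\<lambda>x. esym i (lam x)) -` {0<..})"
  proof -
    have "k \<in> {1..k}"
      using False by simp
    then show ?thesis
      unfolding T_def gamma_cone_def vimage_def greaterThan_iff by blast
  qed
  have T_closed: "T = (\<Inter>i\<in>{1..k}. S \<inter> (\<lambda>x. esym i (lam x)) -` {0..})"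
  proof -
    have "lam x \<in> gamma_cone k" if "x \<in> S" "\<forall>i\<in>{1..k}. esym i (lam x) \<ge> 0" for x
    proof (rule gamma_cone_if_esym_nonneg)
      have "esym k (lam x) \<ge> 0"
        using that(2) False by simp
      then show "esym k (lam x) > 0"
        using nz[OF that(1)] by (simp add: order_le_neq_trans)
    qed (use that assms(4) in auto)
    then show ?thesis
      using False unfolding T_def gamma_cone_def by (force intro: order_less_imp_le)
  qed
  have "openin (top_of_set S) T"
    unfolding T_open using False
    by (intro openin_INT2) (auto intro: continuous_openin_preimage_gen[OF cont open_greaterThan])
  moreover have "closedin (top_of_set S) T"
    unfolding T_closed using False
    by (intro closedin_INT) (auto intro: continuous_closedin_preimage[OF cont closed_atLeast])
  ultimately have "T = {} \<or> T = S"
    using assms(1) unfolding connected_clopen by blast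
  then show ?thesis
    using assms(2,3,7) unfolding T_def by auto
qed

section \<open>Spectral theorem for real symmetric matrices\<close>

lemma symmetric_matrix_inner:
  fixes A :: "real^'n^'n"
  assumes "transpose A = A"
  shows "x \<bullet> (A *v y) = (A *v x) \<bullet> y"
proof -
  have "x \<bullet> (A *v y) = (x v* A) \<bullet> y"
    by (simp add: dot_lmul_matrix)
  also have "x v* A = transpose A *v x"
    by simp
  finally show ?thesis
    using assms by simp
qed

lemma quadratic_nonpos_imp_linear_coeff_zero:
  fixes b c :: real
  assumes "\<And>t. 2 * t * b + t\<^sup>2 * c \<le> 0"
  shows "b = 0"
proof (rule ccontr)
  assume b: "b \<noteq> 0"
  define s where "s = 1 / (\<bar>c\<bar> + 1)"
  have s: "s > 0" "s * \<bar>c\<bar> < 1"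
    unfolding s_def by (auto simp: field_simps)
  have "2 * (s * b) * b + (s * b)\<^sup>2 * c \<le> 0"
    by (rule assms)
  then have "s * b\<^sup>2 * (2 + s * c) \<le> 0"
    by (simp add: algebra_simps power2_eq_square)
  moreover have "s * b\<^sup>2 > 0"
    using s b by simp
  moreover have "s * (- \<bar>c\<bar>) \<le> s * c"
    using s(1) by (intro mult_left_mono) auto
  then have "2 + s * c > 0"
    using s(2) by simp
  ultimately show False
    using mult_pos_pos[of "s * b\<^sup>2" "2 + s * c"] by linarith
qed

lemma rayleigh_max_orthogonal:
  fixes A :: "real^'n^'n"
  assumes sym: "transpose A = A" and W: "subspace W" and x0: "x0 \<in> W" "norm x0 = 1"
    and max: "\<And>y. y \<in> W \<Longrightarrow> norm y = 1 \<Longrightarrow> y \<bullet> (A *v y) \<le> x0 \<bullet> (A *v x0)"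
    and y: "y \<in> W" "y \<bullet> x0 = 0"
  shows "y \<bullet> (A *v x0) = 0"
proof (rule quadratic_nonpos_imp_linear_coeff_zero)
  fix t :: real
  define M where "M = x0 \<bullet> (A *v x0)"
  define z where "z = x0 + t *\<^sub>R y"
  have xx: "x0 \<bullet> x0 = 1"
    using x0(2) by (simp add: dot_square_norm)
  have zz: "z \<bullet> z = 1 + t\<^sup>2 * (y \<bullet> y)"
    unfolding z_def using xx y(2)
    by (simp add: inner_add_left inner_add_right inner_commute power2_eq_square)
  then have "z \<bullet> z > 0"
    by (simp add: add_pos_nonneg)
  then have nz: "norm z > 0"
    by (simp add: dot_square_norm)
  have "z \<in> W"
    unfolding z_def using x0(1) y(1) W by (simp add: subspace_mul subspace_add)
  then have "(1 / norm z) *\<^sub>R z \<in> W"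
    using W by (simp add: subspace_mul)
  then have "((1 / norm z) *\<^sub>R z) \<bullet> (A *v ((1 / norm z) *\<^sub>R z)) \<le> M"
    unfolding M_def using nz by (intro max) auto
  then have "z \<bullet> (A *v z) \<le> M * (norm z)\<^sup>2"
    using nz by (simp add: matrix_vector_mult_scaleR power2_eq_square field_simps)
  then have le: "z \<bullet> (A *v z) \<le> M * (z \<bullet> z)"
    by (simp add: dot_square_norm)
  have "x0 \<bullet> (A *v y) = y \<bullet> (A *v x0)"
    using symmetric_matrix_inner[OF sym, of x0 y] by (simp add: inner_commute)
  then have "z \<bullet> (A *v z) = M + 2 * t * (y \<bullet> (A *v x0)) + t\<^sup>2 * (y \<bullet> (A *v y))"
    unfolding z_def M_def
    by (simp add: matrix_vector_right_distrib matrix_vector_mult_scaleR inner_add_left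
        inner_add_right algebra_simps power2_eq_square)
  then show "2 * t * (y \<bullet> (A *v x0)) + t\<^sup>2 * (y \<bullet> (A *v y) - M * (y \<bullet> y)) \<le> 0"
    using le unfolding zz by (simp add: algebra_simps)
qed

lemma symmetric_matrix_eigenvector_in_subspace:
  fixes A :: "real^'n^'n"
  assumes sym: "transpose A = A" and W: "subspace W" and inv: "\<forall>x\<in>W. A *v x \<in> W"
    and nz: "\<exists>x\<in>W. x \<noteq> 0"
  shows "\<exists>x\<in>W. norm x = 1 \<and> (\<exists>\<mu>. A *v x = \<mu> *\<^sub>R x)"
proof -
  define C where "C = W \<inter> sphere 0 1"
  have C_compact: "compact C"
    unfolding C_def using closed_subspace[OF W] by (simp add: closed_Int_compact Int_commute)
  obtain x1 where x1: "x1 \<in> W" "x1 \<noteq> 0"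
    using nz by auto
  then have "(1 / norm x1) *\<^sub>R x1 \<in> C"
    unfolding C_def using W by (simp add: subspace_mul)
  then have C_ne: "C \<noteq> {}"
    by auto
  have "continuous_on C (\<lambda>x. x \<bullet> (A *v x))"
    by (intro continuous_intros continuous_on_id linear_continuous_on)
      (simp add: matrix_vector_mul_bounded_linear)
  then obtain x0 where x0: "x0 \<in> C" and max: "\<And>y. y \<in> C \<Longrightarrow> y \<bullet> (A *v y) \<le> x0 \<bullet> (A *v x0)"
    using continuous_attains_sup[OF C_compact C_ne] by blast
  have x0W: "x0 \<in> W" and nx0: "norm x0 = 1"
    using x0 C_def by auto
  define M where "M = x0 \<bullet> (A *v x0)"
  define r where "r = A *v x0 - M *\<^sub>R x0"
  have rW: "r \<in> W"
    unfolding r_def using inv x0W W by (simp add: subspace_diff subspace_mul)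
  have "x0 \<bullet> x0 = 1"
    using nx0 by (simp add: dot_square_norm)
  moreover have "x0 \<bullet> r = M - M * (x0 \<bullet> x0)"
    unfolding r_def M_def by (simp add: inner_diff_right)
  ultimately have rx: "r \<bullet> x0 = 0"
    by (simp add: inner_commute)
  have "\<And>y. y \<in> W \<Longrightarrow> norm y = 1 \<Longrightarrow> y \<bullet> (A *v y) \<le> x0 \<bullet> (A *v x0)"
    using max unfolding C_def by simp
  then have rA: "r \<bullet> (A *v x0) = 0"
    by (rule rayleigh_max_orthogonal[OF sym W x0W nx0 _ rW rx])
  have "r \<bullet> r = r \<bullet> (A *v x0) - M * (r \<bullet> x0)"
    unfolding r_def by (simp add: inner_diff_right)
  then have "r = 0"
    using rA rx by simp
  then have "A *v x0 = M *\<^sub>R x0"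
    unfolding r_def by simp
  then show ?thesis
    using x0W nx0 by blast
qed

lemma orthogonal_eigenvectors_invariant:
  fixes A :: "real^'n^'n"
  assumes sym: "transpose A = A" and "\<forall>b\<in>B. \<exists>\<mu>. A *v b = \<mu> *\<^sub>R b" and "\<forall>b\<in>B. b \<bullet> x = 0"
  shows "\<forall>b\<in>B. b \<bullet> (A *v x) = 0"
proof
  fix b
  assume b: "b \<in> B"
  then obtain \<mu> where "A *v b = \<mu> *\<^sub>R b"
    using assms(2) by blast
  then show "b \<bullet> (A *v x) = 0"
    using symmetric_matrix_inner[OF sym, of b x] assms(3) b by simp
qed

lemma exists_nonzero_orthogonal_to_finite:
  fixes B :: "(real^'n) set"
  assumes "finite B" "card B < CARD('n)"
  shows "\<exists>x. x \<noteq> 0 \<and> (\<forall>b\<in>B. b \<bullet> x = 0)"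
proof -
  have "dim B < DIM(real^'n)"
    using dim_le_card[OF span_superset assms(1)] assms(2) by simp
  then obtain x where x: "x \<noteq> 0" "\<And>y. y \<in> span B \<Longrightarrow> orthogonal x y"
    using orthogonal_to_subspace_exists by blast
  have "b \<bullet> x = 0" if "b \<in> B" for b
    using x(2)[OF span_base[OF that]] by (simp add: orthogonal_def inner_commute)
  then show ?thesis
    using x(1) by blast
qed

lemma symmetric_matrix_orthonormal_eigenvectors:
  fixes A :: "real^'n^'n"
  assumes sym: "transpose A = A" and "m \<le> CARD('n)"
  shows "\<exists>B. finite B \<and> card B = m \<and> (\<forall>x\<in>B. norm x = 1 \<and> (\<exists>\<mu>. A *v x = \<mu> *\<^sub>R x))
            \<and> (\<forall>x\<in>B. \<forall>y\<in>B. x \<noteq> y \<longrightarrow> x \<bullet> y = 0)"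
  using assms(2)
proof (induction m)
  case 0
  then show ?case
    by (intro exI[of _ "{}"]) auto
next
  case (Suc m)
  then obtain B where B: "finite B" "card B = m" "\<forall>x\<in>B. norm x = 1 \<and> (\<exists>\<mu>. A *v x = \<mu> *\<^sub>R x)"
    "\<forall>x\<in>B. \<forall>y\<in>B. x \<noteq> y \<longrightarrow> x \<bullet> y = 0"
    by auto
  define W where "W = {x. \<forall>b\<in>B. b \<bullet> x = 0}"
  have "subspace W"
    unfolding W_def subspace_def by (auto simp: inner_add_right)
  moreover have "\<forall>x\<in>W. A *v x \<in> W"
    using orthogonal_eigenvectors_invariant[OF sym] B(3) unfolding W_def by blast
  moreover have "\<exists>x\<in>W. x \<noteq> 0"
    using exists_nonzero_orthogonal_to_finite[OF B(1)] B(2) Suc.prems unfolding W_def by auto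
  ultimately obtain e where e: "e \<in> W" "norm e = 1" "\<exists>\<mu>. A *v e = \<mu> *\<^sub>R e"
    using symmetric_matrix_eigenvector_in_subspace[OF sym] by blast
  have "e \<notin> B"
  proof
    assume "e \<in> B"
    then have "e \<bullet> e = 0"
      using e(1) W_def by auto
    then show False
      using e(2) by simp
  qed
  show ?case
  proof (intro exI[of _ "insert e B"] conjI)
    show "finite (insert e B)" "card (insert e B) = Suc m"
      using B(1,2) \<open>e \<notin> B\<close> by simp_all
    show "\<forall>x\<in>insert e B. norm x = 1 \<and> (\<exists>\<mu>. A *v x = \<mu> *\<^sub>R x)"
      using B(3) e by auto
    show "\<forall>x\<in>insert e B. \<forall>y\<in>insert e B. x \<noteq> y \<longrightarrow> x \<bullet> y = 0"
      using B(4) e(1) W_def by (auto simp: inner_commute)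
  qed
qed

lemma symmetric_matrix_diagonalizable:
  fixes A :: "real^'n^'n"
  assumes sym: "transpose A = A"
  shows "\<exists>(P::real^'n^'n) \<mu>. transpose P ** P = mat 1 \<and> transpose P ** A ** P = diagm \<mu>"
proof -
  obtain B where B: "finite B" "card B = CARD('n)" "\<forall>x\<in>B. norm x = 1 \<and> (\<exists>\<mu>. A *v x = \<mu> *\<^sub>R x)"
    "\<forall>x\<in>B. \<forall>y\<in>B. x \<noteq> y \<longrightarrow> x \<bullet> y = 0"
    using symmetric_matrix_orthonormal_eigenvectors[OF sym, of "CARD('n)"] by auto
  obtain h where h: "bij_betw h (UNIV::'n set) B"
    using finite_same_card_bij[of "UNIV::'n set" B] B(1,2) by auto
  have hB: "h i \<in> B" for i
    using h bij_betwE by blast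
  have hh: "h i \<bullet> h j = (if i = j then 1 else 0)" for i j
  proof (cases "i = j")
    case True
    then show ?thesis
      using B(3) hB[of i] by (simp add: dot_square_norm)
  next
    case False
    then have "h i \<noteq> h j"
      using h by (meson UNIV_I bij_betw_def inj_onD)
    then show ?thesis
      using B(4) hB[of i] hB[of j] False by simp
  qed
  define \<mu> where "\<mu> = (\<chi> c. SOME m. A *v h c = m *\<^sub>R h c)"
  have eig: "A *v h c = (\<mu> $ c) *\<^sub>R h c" for c
    unfolding \<mu>_def using B(3) hB[of c] by (auto intro: someI_ex)
  define P :: "real^'n^'n" where "P = (\<chi> r c. h c $ r)"
  have col_P: "column j P = h j" for j
    unfolding P_def column_def by (simp add: vec_eq_iff)
  have "(A ** P) $ r $ c = (A *v h c) $ r" for r c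
    unfolding P_def matrix_matrix_mult_def matrix_vector_mult_def by simp
  then have col_AP: "column j (A ** P) = (\<mu> $ j) *\<^sub>R h j" for j
    using eig by (simp add: column_def vec_eq_iff)
  have TPM: "(transpose P ** M) $ i $ j = h i \<bullet> column j M" for M :: "real^'n^'n" and i j
    unfolding P_def matrix_matrix_mult_def transpose_def inner_vec_def column_def by simp
  have diag: "(transpose P ** (A ** P)) $ i $ j = (if i = j then \<mu> $ i else 0)" for i j
    using TPM[of "A ** P" i j] col_AP hh by simp
  have "transpose P ** P = mat 1"
    using TPM[of P] col_P hh by (simp add: vec_eq_iff mat_def)
  moreover have "transpose P ** A ** P = diagm \<mu>"
    using diag by (simp add: vec_eq_iff diagm_def matrix_mul_assoc)
  ultimately show ?thesis
    by blast
qed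

section \<open>Eigenvalues with respect to a metric\<close>

lemma g_eigvals_conformal:
  fixes A :: "real^'n^'n"
  assumes c: "c > 0" and sym: "transpose A = A"
  shows "\<exists>lam. g_eigvals (c *\<^sub>R mat 1) A lam"
proof -
  obtain P :: "real^'n^'n" and \<mu> where P: "transpose P ** P = mat 1" "transpose P ** A ** P = diagm \<mu>"
    using symmetric_matrix_diagonalizable[OF sym] by blast
  define Q where "Q = (1 / sqrt c) *\<^sub>R P"
  have s: "(1 / sqrt c) * (1 / sqrt c) = 1 / c"
    using c by (simp add: real_sqrt_mult[symmetric])
  have "transpose Q ** (c *\<^sub>R mat 1) ** Q = mat 1"
    unfolding Q_def transpose_scalar using P(1) c s
    by (simp add: matrix_scalar_ac scalar_matrix_assoc[symmetric] matrix_mul_assoc)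
  moreover have "transpose Q ** A ** Q = diagm ((1 / c) *\<^sub>R \<mu>)"
  proof -
    have "diagm ((1 / c) *\<^sub>R \<mu>) = (1 / c) *\<^sub>R diagm \<mu>"
      by (simp add: diagm_def vec_eq_iff)
    then show ?thesis
      unfolding Q_def transpose_scalar using P(2) s
      by (simp add: matrix_scalar_ac scalar_matrix_assoc[symmetric])
  qed
  ultimately show ?thesis
    unfolding g_eigvals_def by blast
qed

lemma matrix_add_rdistrib: "((B::real^'m^'k) + C) ** (A::real^'n^'m) = B ** A + C ** A"
  by (simp add: matrix_matrix_mult_def vec_eq_iff sum.distrib algebra_simps)

lemma congruence_diag_entry:
  fixes P A :: "real^'n^'n"
  shows "(transpose P ** A ** P) $ i $ i = column i P \<bullet> (A *v column i P)"
proof -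
  have "(transpose P ** A ** P) $ i $ i = (\<Sum>k\<in>UNIV. (\<Sum>l\<in>UNIV. P $ l $ i * A $ l $ k) * P $ k $ i)"
    unfolding matrix_matrix_mult_def transpose_def by simp
  also have "\<dots> = (\<Sum>k\<in>UNIV. \<Sum>l\<in>UNIV. P $ l $ i * (A $ l $ k * P $ k $ i))"
    by (simp add: sum_distrib_right mult.assoc)
  also have "\<dots> = (\<Sum>l\<in>UNIV. \<Sum>k\<in>UNIV. P $ l $ i * (A $ l $ k * P $ k $ i))"
    by (rule sum.swap)
  also have "\<dots> = column i P \<bullet> (A *v column i P)"
    unfolding matrix_vector_mult_def inner_vec_def column_def by (simp add: sum_distrib_left)
  finally show ?thesis .
qed

lemma g_eigvals_det:
  fixes g A :: "real^'n^'n"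
  assumes "g_eigvals g A lam"
  shows "det g \<noteq> 0" "(\<Prod>i\<in>UNIV. t + lam $ i) = det (t *\<^sub>R g + A) / det g"
proof -
  obtain P where P: "transpose P ** g ** P = mat 1" "transpose P ** A ** P = diagm lam"
    using assms unfolding g_eigvals_def by blast
  have dP: "det P * det P * det g = 1"
    using arg_cong[OF P(1), of det] by (simp add: det_mul mult_ac)
  then show dg: "det g \<noteq> 0"
    by auto
  have "transpose P ** (t *\<^sub>R g + A) ** P = t *\<^sub>R mat 1 + diagm lam"
    using P by (simp add: matrix_add_ldistrib matrix_add_rdistrib matrix_scalar_ac
        scalar_matrix_assoc[symmetric] matrix_mul_assoc)
  then have "det P * det P * det (t *\<^sub>R g + A) = det (t *\<^sub>R (mat 1::real^'n^'n) + diagm lam)"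
    by (metis (no_types, lifting) det_mul det_transpose mult.commute mult.left_commute)
  also have "\<dots> = (\<Prod>i\<in>UNIV. t + lam $ i)"
    by (subst det_diagonal) (auto simp: diagm_def mat_def)
  finally have "det P * det P * det (t *\<^sub>R g + A) = (\<Prod>i\<in>UNIV. t + lam $ i)" .
  moreover have "det P * det P = 1 / det g"
    using dP dg by (simp add: field_simps)
  ultimately show "(\<Prod>i\<in>UNIV. t + lam $ i) = det (t *\<^sub>R g + A) / det g"
    by simp
qed

lemma g_eigvals_nonneg:
  fixes g A :: "real^'n^'n"
  assumes "g_eigvals g A lam" "\<And>v. 0 \<le> v \<bullet> (A *v v)"
  shows "0 \<le> lam $ i"
proof -
  obtain P where P: "transpose P ** A ** P = diagm lam"
    using assms(1) unfolding g_eigvals_def by blast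
  have "lam $ i = (transpose P ** A ** P) $ i $ i"
    unfolding P by (simp add: diagm_def)
  then show ?thesis
    using assms(2) congruence_diag_entry[of P A i] by simp
qed

definition pencil_charpoly :: "real^'n^'n \<Rightarrow> real^'n^'n \<Rightarrow> real poly" where
  "pencil_charpoly g A = smult (1 / det g) (det (\<chi> i j. [:A $ i $ j, g $ i $ j:]))"

lemma poly_det: "poly (det (M :: real poly^'n^'n)) t = det (\<chi> i j. poly (M $ i $ j) t)"
  unfolding det_def by (simp add: poly_sum poly_prod)

lemma poly_pencil_charpoly: "poly (pencil_charpoly g A) t = det (t *\<^sub>R g + A) / det g"
proof -
  have "(\<chi> i j. poly ((\<chi> i j. [:A $ i $ j, g $ i $ j:]) $ i $ j) t) = t *\<^sub>R g + A"
    by (simp add: vec_eq_iff algebra_simps)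
  then show ?thesis
    unfolding pencil_charpoly_def by (simp add: poly_det)
qed

text \<open>\<open>tensor_eigvals\<close> is an arbitrary choice, but the \<open>\<sigma>\<^sub>j\<close> are determined by the pencil;
  this is what makes them continuous.\<close>

lemma sigma_t_eq_coeff_pencil_charpoly:
  fixes g A :: "real^'n^'n"
  assumes "\<exists>lam. g_eigvals g A lam" "j \<le> CARD('n)"
  shows "sigma_t j g A = coeff (pencil_charpoly g A) (CARD('n) - j)"
proof -
  have eig: "g_eigvals g A (tensor_eigvals g A)"
    unfolding tensor_eigvals_def using assms(1) by (rule someI_ex)
  have "poly (\<Prod>i\<in>UNIV. [:tensor_eigvals g A $ i, 1:]) t = poly (pencil_charpoly g A) t" for t
    using g_eigvals_det(2)[OF eig, of t] by (simp add: poly_prod poly_pencil_charpoly add.commute)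
  then have "(\<Prod>i\<in>UNIV. [:tensor_eigvals g A $ i, 1:]) = pencil_charpoly g A"
    using poly_eq_poly_eq_iff by blast
  then show ?thesis
    unfolding sigma_t_def using esym_eq_coeff_prod[OF assms(2)] by simp
qed

lemma continuous_on_coeff_prod:
  assumes "finite I" "\<And>i m. i \<in> I \<Longrightarrow> continuous_on S (\<lambda>x. coeff (f x i) m)"
  shows "continuous_on S (\<lambda>x. coeff (\<Prod>i\<in>I. f x i :: real poly) m)"
  using assms
proof (induction I arbitrary: m rule: finite_induct)
  case empty
  then show ?case
    by (simp add: coeff_1)
next
  case (insert a I)
  then show ?case
    unfolding prod.insert[OF insert(1,2)] coeff_mult by (intro continuous_intros) auto
qed

lemma continuous_on_coeff_det:
  fixes M :: "'a::topological_space \<Rightarrow> real poly^'n^'n"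
  assumes "\<And>i j m. continuous_on S (\<lambda>x. coeff (M x $ i $ j) m)"
  shows "continuous_on S (\<lambda>x. coeff (det (M x)) m)"
proof -
  have "coeff (det (M x)) m = (\<Sum>p\<in>{p. p permutes (UNIV::'n set)}.
      of_int (sign p) * coeff (\<Prod>i\<in>UNIV. M x $ i $ p i) m)" for x
    unfolding det_def coeff_sum by (simp add: of_int_poly)
  moreover have "continuous_on S (\<lambda>x. \<Sum>p\<in>{p. p permutes (UNIV::'n set)}.
      of_int (sign p) * coeff (\<Prod>i\<in>UNIV. M x $ i $ p i) m)"
    by (intro continuous_intros continuous_on_coeff_prod assms) auto
  ultimately show ?thesis
    by simp
qed

lemma continuous_on_coeff_pencil_charpoly:
  fixes g A :: "'a::topological_space \<Rightarrow> real^'n^'n"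
  assumes "\<And>i j. continuous_on S (\<lambda>x. g x $ i $ j)" "\<And>i j. continuous_on S (\<lambda>x. A x $ i $ j)"
    and "\<And>x. x \<in> S \<Longrightarrow> det (g x) \<noteq> 0"
  shows "continuous_on S (\<lambda>x. coeff (pencil_charpoly (g x) (A x)) m)"
proof -
  have "continuous_on S (\<lambda>x. coeff ((\<chi> i j. [:A x $ i $ j, g x $ i $ j:]) $ i $ j) m)" for i j m
  proof (cases m)
    case (Suc k)
    then show ?thesis
      using assms(1) by (cases k) simp_all
  qed (use assms(2) in simp)
  moreover have "continuous_on S (\<lambda>x. det (g x))"
    unfolding det_def by (intro continuous_intros assms(1))
  ultimately show ?thesis
    unfolding pencil_charpoly_def coeff_smult
    by (intro continuous_intros continuous_on_coeff_det) (use assms(3) in auto)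
qed

lemma sigma_t_continuous_on:
  fixes g A :: "'a::topological_space \<Rightarrow> real^'n^'n"
  assumes "\<And>i j. continuous_on S (\<lambda>x. g x $ i $ j)" "\<And>i j. continuous_on S (\<lambda>x. A x $ i $ j)"
    and eig: "\<And>x. x \<in> S \<Longrightarrow> \<exists>lam. g_eigvals (g x) (A x) lam" and "j \<le> CARD('n)"
  shows "continuous_on S (\<lambda>x. sigma_t j (g x) (A x))"
proof -
  have "det (g x) \<noteq> 0" if "x \<in> S" for x
    using eig[OF that] g_eigvals_det(1) by blast
  then have "continuous_on S (\<lambda>x. coeff (pencil_charpoly (g x) (A x)) (CARD('n) - j))"
    by (intro continuous_on_coeff_pencil_charpoly assms(1,2))
  then show ?thesis
    by (rule continuous_on_eq) (metis sigma_t_eq_coeff_pencil_charpoly eig assms(4))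
qed

section \<open>Partial derivatives\<close>

lemma has_real_derivative_along_line:
  assumes "(f has_derivative f') (at (y + s0 *\<^sub>R w))"
  shows "((\<lambda>s. f (y + s *\<^sub>R w)) has_real_derivative f' w) (at s0)"
proof -
  have "((\<lambda>s. y + s *\<^sub>R w) has_derivative (\<lambda>s. s *\<^sub>R w)) (at s0)"
    by (auto intro!: derivative_eq_intros)
  from has_derivative_compose[OF this assms]
  have "((\<lambda>s. f (y + s *\<^sub>R w)) has_derivative (\<lambda>s. f' (s *\<^sub>R w))) (at s0)"
    by (simp add: o_def)
  moreover have "linear f'"
    using assms has_derivative_linear by blast
  ultimately have "((\<lambda>s. f (y + s *\<^sub>R w)) has_derivative (\<lambda>s. s * f' w)) (at s0)"
    by (simp add: linear_scale)
  moreover have "(\<lambda>s. s * f' w) = (*) (f' w)"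
    by (auto simp: mult.commute)
  ultimately show ?thesis
    by (simp add: has_field_derivative_def)
qed

lemma pd_eq_frechet:
  assumes "(f has_derivative f') (at x)"
  shows "pd f i x = f' (axis i 1)"
  unfolding pd_def
  by (rule DERIV_imp_deriv, rule has_real_derivative_along_line) (use assms in simp)

lemma frechet_eq_inner_egrad:
  assumes "(f has_derivative f') (at x)"
  shows "f' h = egrad f x \<bullet> h"
proof -
  have lin: "linear f'"
    using assms has_derivative_linear by blast
  have "(\<Sum>i\<in>UNIV. h $ i *\<^sub>R axis i 1) = h"
    using basis_expansion[of h] by (simp add: scalar_mult_eq_scaleR)
  moreover have "f' (\<Sum>i\<in>UNIV. h $ i *\<^sub>R axis i 1) = (\<Sum>i\<in>UNIV. h $ i * f' (axis i 1))"
    by (simp add: linear_sum[OF lin] linear_scale[OF lin])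
  ultimately have "f' h = (\<Sum>i\<in>UNIV. h $ i * f' (axis i 1))"
    by simp
  also have "\<dots> = egrad f x \<bullet> h"
    unfolding egrad_def inner_vec_def using pd_eq_frechet[OF assms] by (simp add: mult.commute)
  finally show ?thesis .
qed

lemma has_derivative_egrad:
  assumes "f differentiable (at x)"
  shows "(f has_derivative (\<lambda>h. egrad f x \<bullet> h)) (at x)"
proof -
  obtain f' where f': "(f has_derivative f') (at x)"
    using assms differentiable_def by blast
  moreover have "f' = (\<lambda>h. egrad f x \<bullet> h)"
    using frechet_eq_inner_egrad[OF f'] by auto
  ultimately show ?thesis
    by simp
qed

lemma DERIV_along_line:
  assumes "f differentiable (at (y + s0 *\<^sub>R w))"
  shows "((\<lambda>s. f (y + s *\<^sub>R w)) has_real_derivative (egrad f (y + s0 *\<^sub>R w) \<bullet> w)) (at s0)"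
  using has_real_derivative_along_line[OF has_derivative_egrad[OF assms]] .

lemma egrad_axis: "egrad f x \<bullet> axis i 1 = pd f i x"
  by (simp add: egrad_def inner_axis)

lemma C2_on_subset:
  assumes "C2_on U f" "V \<subseteq> U"
  shows "C2_on V f"
  using assms continuous_on_subset[of U _ V] unfolding C2_on_def by blast

lemma second_difference_mvt:
  fixes u :: "real^'n \<Rightarrow> real"
  assumes du: "\<forall>y\<in>U. u differentiable (at y)"
    and dpu: "\<forall>y\<in>U. pd u i differentiable (at y)"
    and h: "h > 0"
    and inU: "\<And>s r. 0 \<le> s \<Longrightarrow> s \<le> h \<Longrightarrow> 0 \<le> r \<Longrightarrow> r \<le> h \<Longrightarrow> x + s *\<^sub>R axis i 1 + r *\<^sub>R axis j 1 \<in> U"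
  shows "\<exists>\<xi> \<eta>. 0 < \<xi> \<and> \<xi> < h \<and> 0 < \<eta> \<and> \<eta> < h \<and>
     u (x + h *\<^sub>R axis i 1 + h *\<^sub>R axis j 1) - u (x + h *\<^sub>R axis i 1) - u (x + h *\<^sub>R axis j 1) + u x
       = h * h * pd (pd u i) j (x + \<xi> *\<^sub>R axis i 1 + \<eta> *\<^sub>R axis j 1)"
proof -
  define a where "a = (axis i 1 :: real^'n)"
  define b where "b = (axis j 1 :: real^'n)"
  define \<phi> where "\<phi> s = u ((x + h *\<^sub>R b) + s *\<^sub>R a) - u (x + s *\<^sub>R a)" for s
  define \<phi>' where "\<phi>' s = pd u i ((x + h *\<^sub>R b) + s *\<^sub>R a) - pd u i (x + s *\<^sub>R a)" for s
  have "DERIV \<phi> s :> \<phi>' s" if "0 \<le> s" "s \<le> h" for s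
  proof -
    have "(x + h *\<^sub>R b) + s *\<^sub>R a \<in> U" "x + s *\<^sub>R a \<in> U"
      using inU[of s h] inU[of s 0] that h unfolding a_def b_def by (simp_all add: algebra_simps)
    then show ?thesis
      unfolding \<phi>_def[abs_def] \<phi>'_def a_def using du
      by (intro DERIV_diff) (auto intro!: DERIV_along_line[THEN DERIV_cong] simp: egrad_axis)
  qed
  then obtain \<xi> where \<xi>: "0 < \<xi>" "\<xi> < h" "\<phi> h - \<phi> 0 = h * \<phi>' \<xi>"
    using MVT2[OF h, of \<phi> \<phi>'] by auto
  define \<psi> where "\<psi> r = pd u i ((x + \<xi> *\<^sub>R a) + r *\<^sub>R b)" for r
  have "DERIV \<psi> r :> pd (pd u i) j ((x + \<xi> *\<^sub>R a) + r *\<^sub>R b)" if "0 \<le> r" "r \<le> h" for r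
  proof -
    have "(x + \<xi> *\<^sub>R a) + r *\<^sub>R b \<in> U"
      using inU[of \<xi> r] that \<xi> unfolding a_def b_def by simp
    then show ?thesis
      unfolding \<psi>_def[abs_def] b_def using dpu
      by (auto intro!: DERIV_along_line[THEN DERIV_cong] simp: egrad_axis)
  qed
  then obtain \<eta> where \<eta>: "0 < \<eta>" "\<eta> < h"
    "\<psi> h - \<psi> 0 = h * pd (pd u i) j ((x + \<xi> *\<^sub>R a) + \<eta> *\<^sub>R b)"
    using MVT2[OF h, of \<psi> "\<lambda>r. pd (pd u i) j ((x + \<xi> *\<^sub>R a) + r *\<^sub>R b)"] by auto
  have "\<phi>' \<xi> = \<psi> h - \<psi> 0"
    unfolding \<phi>'_def \<psi>_def by (simp add: algebra_simps)
  moreover have "\<phi> h - \<phi> 0 = u (x + h *\<^sub>R a + h *\<^sub>R b) - u (x + h *\<^sub>R a) - u (x + h *\<^sub>R b) + u x"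
    unfolding \<phi>_def by (simp add: ac_simps)
  ultimately show ?thesis
    using \<xi> \<eta> unfolding a_def b_def by (intro exI[of _ \<xi>] exI[of _ \<eta>]) simp
qed

lemma dist_add_axis_steps:
  fixes x :: "real^'n"
  assumes "0 \<le> s" "s \<le> h" "0 \<le> t" "t \<le> h"
  shows "dist (x + s *\<^sub>R axis a 1 + t *\<^sub>R axis b 1) x \<le> 2 * h"
proof -
  have "norm (s *\<^sub>R axis a (1::real) + t *\<^sub>R axis b 1) \<le> s + t"
    using norm_triangle_ineq[of "s *\<^sub>R axis a (1::real)" "t *\<^sub>R axis b 1"] assms by simp
  then show ?thesis
    using assms by (simp add: dist_norm)
qed

text \<open>The second difference of \<open>u\<close> over a small square, expanded in either order of the
  coordinates, is \<open>h\<^sup>2\<close> times either mixed partial at some point of the square.\<close>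

lemma mixed_partials_agree_nearby:
  fixes u :: "real^'n \<Rightarrow> real"
  assumes "open U" "x \<in> U" "C2_on U u" "d > 0"
  shows "\<exists>p q. dist p x < d \<and> dist q x < d \<and> pd (pd u i) j p = pd (pd u j) i q"
proof -
  have du: "\<forall>y\<in>U. u differentiable (at y)" and dpu: "\<forall>y\<in>U. pd u k differentiable (at y)" for k
    using assms(3) unfolding C2_on_def by auto
  obtain r where r: "r > 0" "ball x r \<subseteq> U"
    using assms(1,2) open_contains_ball by blast
  define h where "h = min d r / 4"
  have h: "h > 0" "2 * h < d" "2 * h < r"
    using r assms(4) unfolding h_def by auto
  have inU: "x + s *\<^sub>R axis a 1 + t *\<^sub>R axis b 1 \<in> U"
    if "0 \<le> s" "s \<le> h" "0 \<le> t" "t \<le> h" for s t and a b :: 'n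
  proof -
    have "dist x (x + s *\<^sub>R axis a 1 + t *\<^sub>R axis b 1) < r"
      using dist_add_axis_steps[OF that, of x a b] h by (simp add: dist_commute)
    then show ?thesis
      using r(2) by auto
  qed
  obtain \<xi> \<eta> where A: "0 < \<xi>" "\<xi> < h" "0 < \<eta>" "\<eta> < h"
    "u (x + h *\<^sub>R axis i 1 + h *\<^sub>R axis j 1) - u (x + h *\<^sub>R axis i 1) - u (x + h *\<^sub>R axis j 1) + u x
       = h * h * pd (pd u i) j (x + \<xi> *\<^sub>R axis i 1 + \<eta> *\<^sub>R axis j 1)"
    using second_difference_mvt[OF du dpu h(1) inU] by blast
  obtain \<xi>' \<eta>' where B: "0 < \<xi>'" "\<xi>' < h" "0 < \<eta>'" "\<eta>' < h"
    "u (x + h *\<^sub>R axis j 1 + h *\<^sub>R axis i 1) - u (x + h *\<^sub>R axis j 1) - u (x + h *\<^sub>R axis i 1) + u x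
       = h * h * pd (pd u j) i (x + \<xi>' *\<^sub>R axis j 1 + \<eta>' *\<^sub>R axis i 1)"
    using second_difference_mvt[OF du dpu h(1) inU] by blast
  have "u (x + h *\<^sub>R axis j 1 + h *\<^sub>R axis i 1) = u (x + h *\<^sub>R axis i 1 + h *\<^sub>R axis j 1)"
    by (simp add: ac_simps)
  then have "h * h * pd (pd u i) j (x + \<xi> *\<^sub>R axis i 1 + \<eta> *\<^sub>R axis j 1)
      = h * h * pd (pd u j) i (x + \<xi>' *\<^sub>R axis j 1 + \<eta>' *\<^sub>R axis i 1)"
    using A(5) B(5) by linarith
  then have "pd (pd u i) j (x + \<xi> *\<^sub>R axis i 1 + \<eta> *\<^sub>R axis j 1)
      = pd (pd u j) i (x + \<xi>' *\<^sub>R axis j 1 + \<eta>' *\<^sub>R axis i 1)"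
    using h(1) by simp
  moreover have "dist (x + \<xi> *\<^sub>R axis i 1 + \<eta> *\<^sub>R axis j 1) x < d"
    "dist (x + \<xi>' *\<^sub>R axis j 1 + \<eta>' *\<^sub>R axis i 1) x < d"
    using dist_add_axis_steps[of \<xi> h \<eta> x i j] dist_add_axis_steps[of \<xi>' h \<eta>' x j i] A B h
    by linarith+
  ultimately show ?thesis
    by blast
qed

lemma pd_pd_commute:
  fixes u :: "real^'n \<Rightarrow> real"
  assumes "open U" "x \<in> U" "C2_on U u"
  shows "pd (pd u j) i x = pd (pd u i) j x"
proof (rule ccontr)
  define F where "F = pd (pd u i) j"
  define G where "G = pd (pd u j) i"
  assume "pd (pd u j) i x \<noteq> pd (pd u i) j x"
  then have e: "\<bar>F x - G x\<bar> / 2 > 0"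
    unfolding F_def G_def by simp
  have "isCont F x" "isCont G x"
    using assms unfolding C2_on_def F_def G_def by (auto simp: continuous_on_eq_continuous_at)
  then obtain d1 d2 where d: "d1 > 0" "\<And>y. dist y x < d1 \<Longrightarrow> dist (F y) (F x) < \<bar>F x - G x\<bar> / 2"
    "d2 > 0" "\<And>y. dist y x < d2 \<Longrightarrow> dist (G y) (G x) < \<bar>F x - G x\<bar> / 2"
    using e unfolding continuous_at_eps_delta by blast
  obtain p q where "dist p x < min d1 d2" "dist q x < min d1 d2" "F p = G q"
    using mixed_partials_agree_nearby[OF assms, of "min d1 d2" i j] d unfolding F_def G_def by auto
  then have "\<bar>F p - F x\<bar> < \<bar>F x - G x\<bar> / 2" "\<bar>G q - G x\<bar> < \<bar>F x - G x\<bar> / 2"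
    using d(2)[of p] d(4)[of q] by (simp_all add: dist_real_def)
  then show False
    using \<open>F p = G q\<close> by (simp add: abs_if split: if_splits)
qed

lemma pd_zero_at_min:
  fixes u :: "real^'n \<Rightarrow> real"
  assumes "open \<Omega>" "x0 \<in> \<Omega>" "\<forall>y\<in>\<Omega>. u x0 \<le> u y" "u differentiable (at x0)"
  shows "pd u m x0 = 0"
proof -
  have D: "DERIV (\<lambda>t. u (x0 + t *\<^sub>R axis m 1)) 0 :> pd u m x0"
    using DERIV_along_line[of u x0 0 "axis m 1"] assms(4) unfolding egrad_axis by simp
  obtain d where d: "d > 0" "ball x0 d \<subseteq> \<Omega>"
    using assms(1,2) open_contains_ball by blast
  have "u (x0 + 0 *\<^sub>R axis m 1) \<le> u (x0 + t *\<^sub>R axis m 1)" if "\<bar>0 - t\<bar> < d" for t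
  proof -
    have "x0 + t *\<^sub>R axis m 1 \<in> \<Omega>"
      using that d by (auto simp: dist_norm)
    then show ?thesis
      using assms(3) by simp
  qed
  then show ?thesis
    using DERIV_local_min[OF D d(1)] by blast
qed

definition ehess :: "(real^'n \<Rightarrow> real) \<Rightarrow> real^'n \<Rightarrow> real^'n^'n" where
  "ehess u x = (\<chi> i j. pd (pd u j) i x)"

lemma DERIV_directional_derivative:
  fixes u :: "real^'n \<Rightarrow> real"
  assumes "\<And>j. pd u j differentiable (at x)"
  shows "((\<lambda>t. egrad u (x + t *\<^sub>R v) \<bullet> v) has_real_derivative (v \<bullet> (ehess u x *v v))) (at 0)"
proof -
  have "DERIV (\<lambda>t. pd u j (x + t *\<^sub>R v)) 0 :> (\<Sum>i\<in>UNIV. pd (pd u j) i x * v $ i)" for j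
    using DERIV_along_line[of "pd u j" x 0 v] assms unfolding egrad_def inner_vec_def by simp
  then have "DERIV (\<lambda>t. \<Sum>j\<in>UNIV. pd u j (x + t *\<^sub>R v) * v $ j) 0
      :> (\<Sum>j\<in>UNIV. (\<Sum>i\<in>UNIV. pd (pd u j) i x * v $ i) * v $ j)"
    by (intro DERIV_sum DERIV_cmult_right) auto
  moreover have "(\<Sum>j\<in>UNIV. (\<Sum>i\<in>UNIV. pd (pd u j) i x * v $ i) * v $ j)
      = (\<Sum>j\<in>UNIV. \<Sum>i\<in>UNIV. v $ i * (pd (pd u j) i x * v $ j))"
    by (simp add: sum_distrib_left sum_distrib_right mult_ac)
  also have "\<dots> = (\<Sum>i\<in>UNIV. \<Sum>j\<in>UNIV. v $ i * (pd (pd u j) i x * v $ j))"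
    by (rule sum.swap)
  also have "\<dots> = v \<bullet> (ehess u x *v v)"
    unfolding ehess_def inner_vec_def matrix_vector_mult_def by (simp add: sum_distrib_left)
  ultimately show ?thesis
    unfolding egrad_def inner_vec_def by simp
qed

lemma second_derivative_nonneg_at_local_min:
  fixes f f' :: "real \<Rightarrow> real"
  assumes "d > 0" and f': "\<And>t. \<bar>t\<bar> < d \<Longrightarrow> DERIV f t :> f' t"
    and min: "\<And>t. \<bar>t\<bar> < d \<Longrightarrow> f 0 \<le> f t" and f'': "DERIV f' 0 :> l"
  shows "0 \<le> l"
proof (rule ccontr)
  assume "\<not> 0 \<le> l"
  then have "l < 0"
    by simp
  have "f' 0 = 0"
    using DERIV_local_min[OF f'[of 0]] assms(1) min by auto
  then obtain e where e: "e > 0" "\<And>h. 0 < h \<Longrightarrow> h < e \<Longrightarrow> f' h < 0"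
    using DERIV_neg_dec_right[OF f'' \<open>l < 0\<close>] by force
  define h where "h = min e d / 2"
  have h: "0 < h" "h < e" "h < d"
    using e(1) assms(1) unfolding h_def by auto
  have "continuous_on {0..h} f"
    using f' h by (intro continuous_at_imp_continuous_on ballI DERIV_isCont) force
  then have "f h < f 0"
    using h f' e(2) by (intro DERIV_neg_imp_decreasing_open[OF h(1)]) force+
  then show False
    using min[of h] h by simp
qed

lemma ehess_psd_at_min:
  fixes u :: "real^'n \<Rightarrow> real"
  assumes \<Omega>: "open \<Omega>" "C2_on \<Omega> u" "x0 \<in> \<Omega>" and min: "\<forall>y\<in>\<Omega>. u x0 \<le> u y"
  shows "0 \<le> v \<bullet> (ehess u x0 *v v)"
proof -
  have du: "\<forall>y\<in>\<Omega>. u differentiable (at y)" and dpu: "\<forall>j. \<forall>y\<in>\<Omega>. pd u j differentiable (at y)"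
    using \<Omega>(2) unfolding C2_on_def by auto
  obtain r where r: "r > 0" "ball x0 r \<subseteq> \<Omega>"
    using \<Omega>(1,3) open_contains_ball by blast
  define d where "d = r / (norm v + 1)"
  have "d > 0"
    using r(1) unfolding d_def by (simp add: add_nonneg_pos)
  have line: "x0 + t *\<^sub>R v \<in> \<Omega>" if "\<bar>t\<bar> < d" for t
  proof -
    have "\<bar>t\<bar> * norm v \<le> \<bar>t\<bar> * (norm v + 1)"
      by (simp add: mult_left_mono)
    also have "\<dots> < r"
      using that by (simp add: d_def pos_less_divide_eq add_nonneg_pos)
    finally show ?thesis
      using r(2) by (auto simp: dist_norm)
  qed
  show ?thesis
  proof (rule second_derivative_nonneg_at_local_min[OF \<open>d > 0\<close>])
    show "DERIV (\<lambda>t. u (x0 + t *\<^sub>R v)) t :> egrad u (x0 + t *\<^sub>R v) \<bullet> v" if "\<bar>t\<bar> < d" for t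
      using DERIV_along_line[of u x0 t v] du line[OF that] by simp
    show "u (x0 + 0 *\<^sub>R v) \<le> u (x0 + t *\<^sub>R v)" if "\<bar>t\<bar> < d" for t
      using min line[OF that] by simp
    show "DERIV (\<lambda>t. egrad u (x0 + t *\<^sub>R v) \<bullet> v) 0 :> v \<bullet> (ehess u x0 *v v)"
      using dpu \<Omega>(3) by (intro DERIV_directional_derivative) auto
  qed
qed

section \<open>The conformal metric of the model space\<close>

definition conf_factor :: "real \<Rightarrow> real^'n \<Rightarrow> real" where
  "conf_factor K x = 4 / (1 + K * (x \<bullet> x))\<^sup>2"

lemma gK_eq_conf_factor: "gK K x = conf_factor K x *\<^sub>R mat 1"
  unfolding gK_def conf_factor_def by (simp add: power2_norm_eq_inner)

lemma gK_entry: "gK K x $ a $ b = (if a = b then conf_factor K x else 0)"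
  unfolding gK_eq_conf_factor by (simp add: mat_def)

lemma model_space_denom_pos:
  assumes "x \<in> model_space K"
  shows "1 + K * (x \<bullet> x) > 0"
proof -
  have "\<bar>K\<bar> * (x \<bullet> x) < 1"
    using assms unfolding model_space_def by (simp add: power2_norm_eq_inner)
  moreover have "- \<bar>K\<bar> * (x \<bullet> x) \<le> K * (x \<bullet> x)"
    by (rule mult_right_mono) auto
  ultimately show ?thesis
    by linarith
qed

lemma conf_factor_pos: "x \<in> model_space K \<Longrightarrow> conf_factor K x > 0"
  unfolding conf_factor_def using model_space_denom_pos[of x K] by simp

lemma pd_conf_factor:
  fixes x :: "real^'n"
  assumes "1 + K * (x \<bullet> x) \<noteq> 0"
  shows "pd (conf_factor K) i x = - 16 * K * x $ i / (1 + K * (x \<bullet> x))^3"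
proof -
  define c where "c = 1 + K * (x \<bullet> x)"
  have "(x + t *\<^sub>R axis i 1) \<bullet> (x + t *\<^sub>R axis i 1) = x \<bullet> x + 2 * t * x $ i + t\<^sup>2" for t
    by (simp add: inner_add_left inner_add_right inner_axis inner_axis' power2_eq_square algebra_simps)
  then have "conf_factor K (x + t *\<^sub>R axis i 1) = 4 / (c + K * (2 * t * x $ i + t\<^sup>2))\<^sup>2" for t
    unfolding conf_factor_def c_def by (simp add: algebra_simps)
  moreover have "c \<noteq> 0"
    using assms c_def by simp
  then have "DERIV (\<lambda>t. 4 / (c + K * (2 * t * x $ i + t\<^sup>2))\<^sup>2) 0 :> - 16 * K * x $ i / c^3"
    by (auto intro!: derivative_eq_intros simp: field_simps power2_eq_square power3_eq_cube)
  ultimately have "DERIV (\<lambda>t. conf_factor K (x + t *\<^sub>R axis i 1)) 0 :> - 16 * K * x $ i / c^3"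
    by simp
  then show ?thesis
    unfolding pd_def c_def by (rule DERIV_imp_deriv)
qed

lemma pd_gK_entry:
  assumes "x \<in> model_space K"
  shows "pd (\<lambda>y. gK K y $ a $ b) i x
    = (if a = b then - 16 * K * x $ i / (1 + K * (x \<bullet> x))^3 else 0)"
proof (cases "a = b")
  case True
  then have "(\<lambda>y. gK K y $ a $ b) = conf_factor K"
    by (simp add: gK_entry[abs_def])
  moreover have "1 + K * (x \<bullet> x) \<noteq> 0"
    using model_space_denom_pos[OF assms] by simp
  ultimately show ?thesis
    using True pd_conf_factor by simp
next
  case False
  then have "(\<lambda>y. gK K y $ a $ b) = (\<lambda>y. 0)"
    by (simp add: gK_entry[abs_def])
  then show ?thesis
    using False by (simp add: pd_def)
qed

lemma matrix_inv_scaled_id: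
  assumes "c \<noteq> 0"
  shows "matrix_inv (c *\<^sub>R mat 1 :: real^'n^'n) = (1 / c) *\<^sub>R mat 1"
proof -
  have inv: "(c *\<^sub>R mat 1) ** ((1 / c) *\<^sub>R mat 1) = (mat 1 :: real^'n^'n)"
    "((1 / c) *\<^sub>R mat 1) ** (c *\<^sub>R mat 1) = (mat 1 :: real^'n^'n)"
    using assms by (simp_all add: matrix_scalar_ac scalar_matrix_assoc[symmetric])
  then have "(c *\<^sub>R mat 1) ** matrix_inv (c *\<^sub>R mat 1 :: real^'n^'n) = mat 1"
    unfolding matrix_inv_def by (rule someI2[where Q = "\<lambda>B. _ ** B = _", OF conjI]) auto
  then have "c *\<^sub>R matrix_inv (c *\<^sub>R mat 1 :: real^'n^'n) = mat 1"
    by (simp add: scalar_matrix_assoc[symmetric])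
  then have "(1 / c) *\<^sub>R (c *\<^sub>R matrix_inv (c *\<^sub>R mat 1 :: real^'n^'n)) = (1 / c) *\<^sub>R mat 1"
    by simp
  then show ?thesis
    using assms by simp
qed

lemma matrix_inv_gK_entry:
  assumes "x \<in> model_space K"
  shows "matrix_inv (gK K x) $ a $ b = (if a = b then 1 / conf_factor K x else 0)"
proof -
  have ne: "conf_factor K x \<noteq> 0"
    using conf_factor_pos[OF assms] by simp
  show ?thesis
    unfolding gK_eq_conf_factor matrix_inv_scaled_id[OF ne] by (simp add: mat_def)
qed

lemma christoffel_gK_sym: "christoffel (gK K) m i j x = christoffel (gK K) m j i x"
proof -
  have "(\<lambda>y. gK K y $ i $ j) = (\<lambda>y. gK K y $ j $ i)"
    by (auto simp: gK_entry)
  then show ?thesis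
    unfolding christoffel_def by (simp add: algebra_simps)
qed

lemma gK_entry_continuous_on:
  fixes S :: "(real^'n) set"
  assumes "S \<subseteq> model_space K"
  shows "continuous_on S (\<lambda>x. gK K x $ i $ j)"
proof -
  have "continuous_on S (\<lambda>x::real^'n. 4 / (1 + K * (x \<bullet> x))\<^sup>2)"
    by (intro continuous_intros) (use assms model_space_denom_pos in fastforce)
  then show ?thesis
    unfolding gK_entry conf_factor_def by (cases "i = j") simp_all
qed

lemma christoffel_gK_continuous_on:
  fixes S :: "(real^'n) set"
  assumes "S \<subseteq> model_space K"
  shows "continuous_on S (christoffel (gK K) m i j)"
proof -
  define P where "P a b c x = (if a = b then - 16 * K * x $ c / (1 + K * (x \<bullet> x))^3 else 0)"
    for a b c :: 'n and x :: "real^'n"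
  define Q where "Q a b x = (if a = b then 1 / conf_factor K x else 0)" for a b :: 'n and x :: "real^'n"
  have pos: "1 + K * (x \<bullet> x) \<noteq> 0" if "x \<in> S" for x
    using that assms model_space_denom_pos by fastforce
  have "continuous_on S (P a b c)" for a b c
    unfolding P_def by (cases "a = b") (auto intro!: continuous_intros simp: pos)
  moreover have "continuous_on S (Q a b)" for a b
  proof -
    have inv_cf: "(\<lambda>x. 1 / conf_factor K x) = (\<lambda>x. (1 + K * (x \<bullet> x))\<^sup>2 / 4)"
      by (simp add: conf_factor_def fun_eq_iff)
    have "continuous_on S (\<lambda>x. 1 / conf_factor K x)"
      unfolding inv_cf by (auto intro!: continuous_intros)
    then show ?thesis
      unfolding Q_def by (cases "a = b") simp_all
  qed
  ultimately have "continuous_on S (\<lambda>x. (1/2) * (\<Sum>l\<in>UNIV. Q m l x * (P j l i x + P i l j x - P i j l x)))"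
    by (intro continuous_intros)
  moreover have "(1/2) * (\<Sum>l\<in>UNIV. Q m l x * (P j l i x + P i l j x - P i j l x)) = christoffel (gK K) m i j x"
    if "x \<in> S" for x
  proof -
    have x: "x \<in> model_space K"
      using that assms by auto
    show ?thesis
      unfolding christoffel_def P_def Q_def by (simp add: matrix_inv_gK_entry[OF x] pd_gK_entry[OF x])
  qed
  ultimately show ?thesis
    by (rule continuous_on_eq)
qed

lemma rhess_gK_symmetric:
  assumes "open U" "x \<in> U" "C2_on U u"
  shows "rhess (gK K) u x $ j $ i = rhess (gK K) u x $ i $ j"
  using pd_pd_commute[OF assms, of j i] christoffel_gK_sym[of K _ j i] by (simp add: rhess_def)

lemma rhess_gK_continuous_on:
  assumes "U \<subseteq> model_space K" "C2_on U u"
  shows "continuous_on U (\<lambda>x. rhess (gK K) u x $ i $ j)"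
proof -
  have "continuous_on U (pd u m)" for m
    using assms(2) unfolding C2_on_def
    by (meson continuous_at_imp_continuous_on differentiable_imp_continuous_within)
  then have "continuous_on U (\<lambda>x. pd (pd u j) i x - (\<Sum>m\<in>UNIV. christoffel (gK K) m i j x * pd u m x))"
    using assms(2) unfolding C2_on_def
    by (intro continuous_intros christoffel_gK_continuous_on[OF assms(1)]) auto
  then show ?thesis
    unfolding rhess_def by simp
qed

lemma rhess_eq_ehess_at_critical:
  assumes "\<And>m. pd u m x = 0"
  shows "rhess g u x = ehess u x"
  using assms unfolding rhess_def ehess_def by simp

section \<open>The boundary conditions force an interior minimum\<close>

lemma eventually_decreasing_along_line:
  assumes "f differentiable (at p)" "egrad f p \<bullet> w < 0"
  shows "\<forall>\<^sub>F h in at_right 0. f (p + h *\<^sub>R w) < f p"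
proof -
  have "DERIV (\<lambda>t. f (p + t *\<^sub>R w)) 0 :> egrad f p \<bullet> w"
    using DERIV_along_line[of f p 0 w] assms(1) by simp
  from DERIV_neg_dec_right[OF this assms(2)]
  obtain d where d: "d > 0" "\<And>h. 0 < h \<Longrightarrow> h < d \<Longrightarrow> f (p + h *\<^sub>R w) < f p"
    by auto
  have "\<forall>\<^sub>F h in at_right 0. h \<in> {0<..<d}"
    using d(1) by (rule eventually_at_right_real)
  then show ?thesis
    by (rule eventually_mono) (use d(2) in auto)
qed

lemma defining_fn_nonpos_on_closure:
  assumes "p \<in> closure \<Omega>" "local_defining_fn \<Omega> p V \<psi>"
  shows "\<psi> p \<le> 0"
proof (rule ccontr)
  have V: "open V" "p \<in> V" "\<Omega> \<inter> V = {x\<in>V. \<psi> x < 0}" "\<psi> differentiable (at p)"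
    using assms(2) unfolding local_defining_fn_def C2_on_def by auto
  assume "\<not> \<psi> p \<le> 0"
  have "p \<notin> \<Omega>"
  proof
    assume "p \<in> \<Omega>"
    then have "p \<in> {x\<in>V. \<psi> x < 0}"
      using V(2,3) by blast
    then show False
      using \<open>\<not> \<psi> p \<le> 0\<close> by simp
  qed
  from \<open>\<not> \<psi> p \<le> 0\<close> have "\<forall>\<^sub>F y in at p. \<psi> y > 0"
    using V(4) differentiable_imp_continuous_within[OF V(4)]
    by (auto simp: isCont_def order_tendstoD)
  moreover have "\<forall>\<^sub>F y in at p. y \<in> V"
    using V(1,2) by (rule eventually_at_in_open')
  ultimately have "\<forall>\<^sub>F y in at p. y \<notin> \<Omega>"
    by eventually_elim (use V(3) in force)
  then show False
    using assms(1) \<open>p \<notin> \<Omega>\<close> by (simp add: closure_def islimpt_iff_eventually)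
qed

lemma neumann_defining_fn_inner_pos:
  assumes p: "p \<in> model_space K" and lf: "local_defining_fn \<Omega> p V \<psi>" and "c2 > 0"
    and neu: "\<And>\<nu>. outward_unit_normal (gK K p) \<Omega> p \<nu> \<Longrightarrow> egrad u p \<bullet> \<nu> = c2"
  shows "egrad u p \<bullet> egrad \<psi> p > 0"
proof -
  define c where "c = conf_factor K p"
  define v where "v = matrix_inv (gK K p) *v egrad \<psi> p"
  define \<beta> where "\<beta> = 1 / sqrt (v \<bullet> (gK K p *v v))"
  have c: "c > 0"
    unfolding c_def using conf_factor_pos[OF p] .
  have "egrad \<psi> p \<noteq> 0"
    using lf unfolding local_defining_fn_def by auto
  moreover have v: "v = (1 / c) *\<^sub>R egrad \<psi> p"
    unfolding v_def gK_eq_conf_factor c_def[symmetric] using c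
    by (simp add: matrix_inv_scaled_id scaleR_matrix_vector_assoc[symmetric])
  ultimately have "v \<bullet> (gK K p *v v) > 0"
    unfolding gK_eq_conf_factor c_def[symmetric] using c
    by (simp add: scaleR_matrix_vector_assoc[symmetric])
  then have \<beta>: "\<beta> > 0"
    unfolding \<beta>_def by simp
  have "outward_unit_normal (gK K p) \<Omega> p (\<beta> *\<^sub>R v)"
    unfolding outward_unit_normal_def using lf unfolding \<beta>_def v_def Let_def by blast
  then have "egrad u p \<bullet> (\<beta> *\<^sub>R v) = c2"
    by (rule neu)
  moreover have "egrad u p \<bullet> (\<beta> *\<^sub>R v) = (\<beta> / c) * (egrad u p \<bullet> egrad \<psi> p)"
    unfolding v by simp
  ultimately have "(\<beta> / c) * (egrad u p \<bullet> egrad \<psi> p) > 0"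
    using \<open>c2 > 0\<close> by simp
  then show ?thesis
    using \<beta> c by (simp add: zero_less_divide_iff zero_less_mult_iff)
qed

text \<open>The witness is \<open>p - h \<nabla>\<psi>(p)\<close> for small \<open>h > 0\<close>.\<close>

lemma exists_interior_point_below:
  assumes "p \<in> closure \<Omega>" and lf: "local_defining_fn \<Omega> p V \<psi>" and "u differentiable (at p)"
    and pos: "egrad u p \<bullet> egrad \<psi> p > 0"
  shows "\<exists>q\<in>\<Omega>. u q < u p"
proof -
  define w where "w = - egrad \<psi> p"
  have V: "open V" "p \<in> V" "\<Omega> \<inter> V = {x\<in>V. \<psi> x < 0}" "\<psi> differentiable (at p)"
    "egrad \<psi> p \<noteq> 0"
    using lf unfolding local_defining_fn_def C2_on_def by auto
  have in_\<Omega>: "x \<in> \<Omega>" if "x \<in> V" "\<psi> x < \<psi> p" for x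
  proof -
    have "x \<in> {x\<in>V. \<psi> x < 0}"
      using that defining_fn_nonpos_on_closure[OF assms(1) lf] by simp
    then show ?thesis
      using V(3) by blast
  qed
  have "((\<lambda>h. p + h *\<^sub>R w) \<longlongrightarrow> p) (at_right 0)"
    by (auto intro!: tendsto_eq_intros)
  then have "\<forall>\<^sub>F h in at_right 0. p + h *\<^sub>R w \<in> V"
    using V(1,2) by (rule topological_tendstoD)
  moreover have "\<forall>\<^sub>F h in at_right 0. \<psi> (p + h *\<^sub>R w) < \<psi> p"
    using V(4,5) unfolding w_def by (intro eventually_decreasing_along_line) auto
  moreover have "\<forall>\<^sub>F h in at_right 0. u (p + h *\<^sub>R w) < u p"
    using assms(3) pos unfolding w_def by (intro eventually_decreasing_along_line) auto
  ultimately have "\<forall>\<^sub>F h in at_right (0::real). p + h *\<^sub>R w \<in> \<Omega> \<and> u (p + h *\<^sub>R w) < u p"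
    by eventually_elim (use in_\<Omega> in blast)
  then show ?thesis
    using eventually_happens'[OF trivial_limit_at_right_real] by blast
qed

lemma exists_interior_min:
  fixes \<Omega> :: "(real^'n) set"
  assumes "open \<Omega>" "\<Omega> \<noteq> {}" "compact (closure \<Omega>)" "closure \<Omega> \<subseteq> model_space K"
    and "C2_boundary \<Omega>" and du: "\<forall>x\<in>closure \<Omega>. u differentiable (at x)" and "c2 > 0"
    and dir: "\<forall>p\<in>frontier \<Omega>. u p = b"
    and neu: "\<forall>p\<in>frontier \<Omega>. \<forall>\<nu>. outward_unit_normal (gK K p) \<Omega> p \<nu> \<longrightarrow> egrad u p \<bullet> \<nu> = c2"
  obtains x0 where "x0 \<in> \<Omega>" "\<And>y. y \<in> closure \<Omega> \<Longrightarrow> u x0 \<le> u y"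
proof -
  have "\<Omega> \<noteq> UNIV"
    using compact_imp_bounded[OF assms(3)] bounded_subset[OF _ closure_subset] not_bounded_UNIV
    by blast
  then obtain p where p: "p \<in> frontier \<Omega>"
    using frontier_not_empty[OF assms(2)] by blast
  then have p_cl: "p \<in> closure \<Omega>"
    by (simp add: frontier_def)
  obtain V \<psi> where lf: "local_defining_fn \<Omega> p V \<psi>"
    using assms(5) p unfolding C2_boundary_def by blast
  have "p \<in> model_space K"
    using p_cl assms(4) by blast
  then have "egrad u p \<bullet> egrad \<psi> p > 0"
    by (rule neumann_defining_fn_inner_pos[OF _ lf \<open>c2 > 0\<close>]) (use neu p in blast)
  then obtain q where q: "q \<in> \<Omega>" "u q < u p"
    using exists_interior_point_below[OF p_cl lf] du p_cl by blast
  have "continuous_on (closure \<Omega>) u"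
    using du by (meson continuous_at_imp_continuous_on differentiable_imp_continuous_within)
  moreover have "closure \<Omega> \<noteq> {}"
    using assms(2) by simp
  ultimately obtain x0 where x0: "x0 \<in> closure \<Omega>" "\<And>y. y \<in> closure \<Omega> \<Longrightarrow> u x0 \<le> u y"
    using continuous_attains_inf[OF assms(3)] by blast
  have "u x0 \<le> u q"
    using x0(2) q(1) closure_subset by blast
  then have "x0 \<notin> frontier \<Omega>"
    using q(2) dir p by fastforce
  then have "x0 \<in> \<Omega>"
    using x0(1) interior_open[OF assms(1)] unfolding frontier_def by blast
  then show ?thesis
    using that x0(2) by blast
qed

section \<open>The tensor \<open>\<nabla>\<^sup>2u + K u g\<close>\<close>

definition shifted_hess :: "real \<Rightarrow> (real^'n \<Rightarrow> real) \<Rightarrow> real^'n \<Rightarrow> real^'n^'n" where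
  "shifted_hess K u x = rhess (gK K) u x + (K * u x) *\<^sub>R gK K x"

lemma shifted_hess_g_eigvals_exist:
  assumes "open U" "U \<subseteq> model_space K" "C2_on U u" "x \<in> U"
  shows "\<exists>lam. g_eigvals (gK K x) (shifted_hess K u x) lam"
proof -
  have "shifted_hess K u x $ j $ i = shifted_hess K u x $ i $ j" for i j
    unfolding shifted_hess_def using rhess_gK_symmetric[OF assms(1,4,3), of K j i] by (simp add: gK_entry)
  then have "transpose (shifted_hess K u x) = shifted_hess K u x"
    by (simp add: transpose_def vec_eq_iff)
  moreover have "conf_factor K x > 0"
    using conf_factor_pos assms(2,4) by blast
  ultimately show ?thesis
    unfolding gK_eq_conf_factor using g_eigvals_conformal by blast
qed

lemma sigma_t_shifted_hess_continuous_on: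
  assumes "open U" "U \<subseteq> model_space K" "C2_on U u" "S \<subseteq> U" "j \<le> CARD('n)"
  shows "continuous_on S (\<lambda>x. sigma_t j (gK K x) (shifted_hess K u x :: real^'n^'n))"
proof (rule sigma_t_continuous_on)
  have "continuous_on U u"
    using assms(3) unfolding C2_on_def
    by (meson continuous_at_imp_continuous_on differentiable_imp_continuous_within)
  then have "continuous_on U (\<lambda>x. rhess (gK K) u x $ a $ b + K * u x * gK K x $ a $ b)" for a b
    by (intro continuous_on_add continuous_on_mult continuous_on_const rhess_gK_continuous_on
        gK_entry_continuous_on assms(2,3))
  then have "continuous_on U (\<lambda>x. shifted_hess K u x $ a $ b)" for a b
    unfolding shifted_hess_def by simp
  then show "continuous_on S (\<lambda>x. shifted_hess K u x $ a $ b)" for a b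
    using assms(4) continuous_on_subset by blast
  show "continuous_on S (\<lambda>x. gK K x $ a $ b)" for a b
    using assms(2,4) by (intro gK_entry_continuous_on) auto
qed (use shifted_hess_g_eigvals_exist[OF assms(1-3)] assms(4,5) in auto)

text \<open>At a minimum the Christoffel terms drop out, and \<open>K u \<ge> 0\<close> keeps \<open>K u g\<close> semidefinite.\<close>

lemma shifted_hess_psd_at_min:
  assumes "open \<Omega>" "\<Omega> \<subseteq> model_space K" "C2_on \<Omega> u" "x0 \<in> \<Omega>" "\<forall>y\<in>\<Omega>. u x0 \<le> u y" "K * u x0 \<ge> 0"
  shows "0 \<le> v \<bullet> (shifted_hess K u x0 *v v)"
proof -
  have "pd u m x0 = 0" for m
    using pd_zero_at_min[OF assms(1,4,5)] assms(3,4) unfolding C2_on_def by blast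
  then have "shifted_hess K u x0 = ehess u x0 + (K * u x0 * conf_factor K x0) *\<^sub>R mat 1"
    unfolding shifted_hess_def gK_eq_conf_factor by (simp add: rhess_eq_ehess_at_critical)
  then have "v \<bullet> (shifted_hess K u x0 *v v) = v \<bullet> (ehess u x0 *v v) + K * u x0 * conf_factor K x0 * (v \<bullet> v)"
    by (simp add: matrix_vector_mult_add_rdistrib scaleR_matrix_vector_assoc[symmetric] inner_add_right)
  moreover have "0 \<le> v \<bullet> (ehess u x0 *v v)"
    using ehess_psd_at_min[OF assms(1,3,4,5)] .
  moreover have "0 \<le> K * u x0 * conf_factor K x0"
    using assms(2,4,6) conf_factor_pos[of x0 K] by auto
  ultimately show ?thesis
    by simp
qed

lemma shifted_hess_gamma_cone_at_min:
  assumes "open \<Omega>" "\<Omega> \<subseteq> model_space K" "C2_on \<Omega> u" "x0 \<in> \<Omega>" "\<forall>y\<in>\<Omega>. u x0 \<le> u y"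
    and "K * u x0 \<ge> 0" "k \<le> CARD('n)"
    and "esym k (tensor_eigvals (gK K x0) (shifted_hess K u x0 :: real^'n^'n)) \<noteq> 0"
  shows "tensor_eigvals (gK K x0) (shifted_hess K u x0) \<in> gamma_cone k"
proof (rule gamma_cone_if_nonneg[OF assms(7) _ assms(8)])
  have "g_eigvals (gK K x0) (shifted_hess K u x0) (tensor_eigvals (gK K x0) (shifted_hess K u x0))"
    unfolding tensor_eigvals_def using shifted_hess_g_eigvals_exist[OF assms(1-4)] by (rule someI_ex)
  moreover have "0 \<le> v \<bullet> (shifted_hess K u x0 *v v)" for v
    using shifted_hess_psd_at_min[OF assms(1-6)] .
  ultimately show "0 \<le> tensor_eigvals (gK K x0) (shifted_hess K u x0) $ i" for i
    by (rule g_eigvals_nonneg)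
qed

theorem lemma3p1:
  fixes \<Omega> :: "(real^'n) set" and u :: "real^'n \<Rightarrow> real"
    and K c1 c2 :: real and k l :: nat
  assumes n2: "CARD('n) \<ge> 2"
    and k: "2 \<le> k" "k \<le> CARD('n)" and l: "l < k"
    and dom: "open \<Omega>" "connected \<Omega>" "\<Omega> \<noteq> {}"
    and bdd: "compact (closure \<Omega>)" "closure \<Omega> \<subseteq> model_space K"
    and bdry: "C2_boundary \<Omega>"
    and c: "c1 > 0" "c2 > 0"
    and reg: "\<exists>U. open U \<and> closure \<Omega> \<subseteq> U \<and> U \<subseteq> model_space K \<and> C2_on U u"
    and eq: "\<forall>x\<in>closure \<Omega>.
       sigma_t k (gK K x) (rhess (gK K) u x + (K * u x) *\<^sub>R gK K x) /
       sigma_t l (gK K x) (rhess (gK K) u x + (K * u x) *\<^sub>R gK K x)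
       = real (CARD('n) choose k) / real (CARD('n) choose l)"
    and dir: "\<forall>p\<in>frontier \<Omega>. u p = K * c1"
    and neu: "\<forall>p\<in>frontier \<Omega>. \<forall>\<nu>. outward_unit_normal (gK K p) \<Omega> p \<nu> \<longrightarrow> egrad u p \<bullet> \<nu> = c2"
    and pos: "\<forall>x\<in>\<Omega>. K * u x \<ge> 0"
  shows "\<forall>x\<in>closure \<Omega>.
     tensor_eigvals (gK K x) (rhess (gK K) u x + (K * u x) *\<^sub>R gK K x) \<in> gamma_cone k"
proof -
  obtain U where U: "open U" "closure \<Omega> \<subseteq> U" "U \<subseteq> model_space K" "C2_on U u"
    using reg by blast
  define lam where "lam x = tensor_eigvals (gK K x) (shifted_hess K u x)" for x
  have cont: "continuous_on (closure \<Omega>) (\<lambda>x. esym i (lam x))" if "i \<in> {1..k}" for i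
    using sigma_t_shifted_hess_continuous_on[OF U(1,3,4,2)] that k
    unfolding lam_def sigma_t_def by auto
  have sk: "esym k (lam x) \<noteq> 0" if "x \<in> closure \<Omega>" for x
  proof
    assume "esym k (lam x) = 0"
    moreover have "esym k (lam x) / esym l (lam x) = real (CARD('n) choose k) / real (CARD('n) choose l)"
      using eq that unfolding lam_def sigma_t_def shifted_hess_def by blast
    ultimately show False
      using k l by simp
  qed
  have "\<forall>x\<in>closure \<Omega>. u differentiable (at x)"
    using U(2,4) unfolding C2_on_def by blast
  then obtain x0 where x0: "x0 \<in> \<Omega>" "\<And>y. y \<in> closure \<Omega> \<Longrightarrow> u x0 \<le> u y"
    using exists_interior_min[OF dom(1,3) bdd bdry _ c(2) dir neu] by blast
  have \<Omega>: "\<Omega> \<subseteq> model_space K" "C2_on \<Omega> u" "\<forall>y\<in>\<Omega>. u x0 \<le> u y"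
    using U(2,3) C2_on_subset[OF U(4)] x0(2) closure_subset by blast+
  have "lam x0 \<in> gamma_cone k"
    using shifted_hess_gamma_cone_at_min[OF dom(1) \<Omega>(1,2) x0(1) \<Omega>(3) _ k(2)] pos x0(1)
      sk[OF closure_subset[THEN subsetD, OF x0(1)]] unfolding lam_def by blast
  then have "lam x \<in> gamma_cone k" if "x \<in> closure \<Omega>" for x
    using gamma_cone_on_connected[OF connected_imp_connected_closure[OF dom(2)] _ _ k(2) cont sk that]
      x0(1) closure_subset by blast
  then show ?thesis
    unfolding lam_def shifted_hess_def by blast
qed

end
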